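(* For $a>0$, $n\ge1$ and $i,j\in\{0,1,\dots,n-1\}$, $$\frac{Z(i,j,1,a,n)}{Z_n(1,a)}=\sum_{\substack{k,l\in\{0,1\}\\(i-k,j-l)\ne(-1,-1)}}a^{k+l}\frac{Z(i-k,j-l,1,a,n-1)}{Z_{n-1}(1,a)(1+a^2)}+\frac{a}{1+a^2}\mathbb{I}_{(i,j)=(0,0),\,n\ge1},$$ where $Z(i,j,1,a,n-1)=0$ unless both $i,j\in\{0,1,\dots,n-2\}$.
   Context: Aztec diamond of size $n$: white vertices $\{(x_1,x_2): x_1\text{ odd},\ x_2\text{ even},\ 1\le x_1\le 2n-1,\ 0\le x_2\le 2n\}$, black vertices $\{(x_1,x_2): x_1\text{ even},\ x_2\text{ odd},\ 0\le x_1\le 2n,\ 1\le x_2\le 2n-1\}$, adjacency when black minus white is $\pm e_1$ with $e_1=(1,1)$ ("horizontal" edges) or $\pm e_2$ with $e_2=(-1,1)$ ("vertical" edges). $Z_n(r,a)$ is the partition function (sum over perfect matchings of products of edge weights) when horizontal edges have weight $r$ and vertical edges weight $ra$; $Z_0(1,a)=1$. $Z(i,j,r,a,n)$ is the partition function of the same weighted graph with vertices $(2i+1,0)$ and $(0,2j+1)$ removed. *)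

theory Defs
  imports Complex_Main
begin

definition aztec_white :: "nat \<Rightarrow> (int \<times> int) set" where
  "aztec_white n = {(x1, x2). odd x1 \<and> even x2 \<and> 1 \<le> x1 \<and> x1 \<le> 2 * int n - 1
                      \<and> 0 \<le> x2 \<and> x2 \<le> 2 * int n}"

definition aztec_black :: "nat \<Rightarrow> (int \<times> int) set" where
  "aztec_black n = {(x1, x2). even x1 \<and> odd x2 \<and> 0 \<le> x1 \<and> x1 \<le> 2 * int n
                      \<and> 1 \<le> x2 \<and> x2 \<le> 2 * int n - 1}"

(* edges are pairs (white, black); black - white = \<plusminus>e1 (horizontal) or \<plusminus>e2 (vertical),
   e1 = (1,1), e2 = (-1,1) *)
definition horiz_step :: "int \<times> int \<Rightarrow> int \<times> int \<Rightarrow> bool" where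
  "horiz_step w b \<longleftrightarrow> (fst b - fst w, snd b - snd w) \<in> {(1, 1), (-1, -1)}"

definition vert_step :: "int \<times> int \<Rightarrow> int \<times> int \<Rightarrow> bool" where
  "vert_step w b \<longleftrightarrow> (fst b - fst w, snd b - snd w) \<in> {(-1, 1), (1, -1)}"

definition az_edges :: "(int \<times> int) set \<Rightarrow> (int \<times> int) set \<Rightarrow> ((int \<times> int) \<times> (int \<times> int)) set" where
  "az_edges W B = {(w, b). w \<in> W \<and> b \<in> B \<and> (horiz_step w b \<or> vert_step w b)}"

definition edge_weight :: "real \<Rightarrow> real \<Rightarrow> (int \<times> int) \<times> (int \<times> int) \<Rightarrow> real" where
  "edge_weight r a e = (if horiz_step (fst e) (snd e) then r else r * a)"

definition perfect_matchings :: "(int \<times> int) set \<Rightarrow> (int \<times> int) set \<Rightarrow> ((int \<times> int) \<times> (int \<times> int)) set set" where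
  "perfect_matchings W B = {M. M \<subseteq> az_edges W B
      \<and> (\<forall>w\<in>W. \<exists>!b. (w, b) \<in> M) \<and> (\<forall>b\<in>B. \<exists>!w. (w, b) \<in> M)}"

definition partition_fn :: "(int \<times> int) set \<Rightarrow> (int \<times> int) set \<Rightarrow> real \<Rightarrow> real \<Rightarrow> real" where
  "partition_fn W B r a = (\<Sum>M\<in>perfect_matchings W B. \<Prod>e\<in>M. edge_weight r a e)"

definition Zn :: "nat \<Rightarrow> real \<Rightarrow> real \<Rightarrow> real" where
  "Zn n r a = partition_fn (aztec_white n) (aztec_black n) r a"

definition Zrem :: "int \<Rightarrow> int \<Rightarrow> real \<Rightarrow> real \<Rightarrow> nat \<Rightarrow> real" where
  "Zrem i j r a n = (if 0 \<le> i \<and> i < int n \<and> 0 \<le> j \<and> j < int n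
      then partition_fn (aztec_white n - {(2 * i + 1, 0)}) (aztec_black n - {(0, 2 * j + 1)}) r a
      else 0)"

end

theory Submission
  imports Defs
begin

text \<open>
  The diamond is scanned row by row from the bottom.  A row of white vertices is encoded by the
  list of its vertices still to be matched, and the partition function of the part of the diamond
  above a row is obtained from the one above the next row by a transfer operator \<open>T = U D\<close>:
  \<open>U\<close> matches the free white vertices to the black row above and \<open>D\<close> matches the remaining black
  vertices to the next white row.  Removing the black vertex \<open>(0, 2j + 1)\<close> replaces \<open>T\<close> by a
  hole operator \<open>H\<close> at step \<open>j\<close>, and removing the white vertex \<open>(2i + 1, 0)\<close> changes the
  initial row.  Both \<open>U\<close> and \<open>D\<close> are computed column by column by a two-state automaton, and
  the argument rests on four commutation relations, proved entrywise by induction on the columns: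
  \<open>U\<^sub>n D\<^sub>n = (1 + a\<^sup>2) D\<^sub>n U\<^sub>n\<^sub>-\<^sub>1\<close>, \<open>U H D = T H + a H T\<close>, \<open>U H e = a H e\<close> for the empty row \<open>e\<close>,
  and \<open>H D = D H\<close> on the initial rows, up to an extra term \<open>a T\<close> when the removed white vertex
  is the first one.  Pushing \<open>U\<close> through \<open>T\<^sup>j H T\<^sup>n\<^sup>-\<^sup>1\<^sup>-\<^sup>j e\<close> with these relations shrinks the
  diamond by one; it produces the factor \<open>(1 + a\<^sup>2)\<^sup>n\<^sup>-\<^sup>1\<close>, the four neighbouring removal
  positions, and, for \<open>i = j = 0\<close>, the correction term \<open>a Z\<^sub>n\<^sub>-\<^sub>1\<close>.
\<close>

section \<open>Perfect matchings of bipartite graphs\<close>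

definition matchings :: "('w \<Rightarrow> 'b \<Rightarrow> bool) \<Rightarrow> 'w set \<Rightarrow> 'b set \<Rightarrow> ('w \<times> 'b) set set" where
  "matchings E W B = {M. M \<subseteq> {(w, b). w \<in> W \<and> b \<in> B \<and> E w b}
      \<and> (\<forall>w\<in>W. \<exists>!b. (w, b) \<in> M) \<and> (\<forall>b\<in>B. \<exists>!w. (w, b) \<in> M)}"

lemma matchings_edge: "M \<in> matchings E W B \<Longrightarrow> (w, b) \<in> M \<Longrightarrow> w \<in> W \<and> b \<in> B \<and> E w b"
  unfolding matchings_def by blast

lemma matchings_unique_white: "M \<in> matchings E W B \<Longrightarrow> w \<in> W \<Longrightarrow> \<exists>!b. (w, b) \<in> M"
  unfolding matchings_def by blast

lemma matchings_unique_black: "M \<in> matchings E W B \<Longrightarrow> b \<in> B \<Longrightarrow> \<exists>!w. (w, b) \<in> M"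
  unfolding matchings_def by blast

lemma matchings_white_eq: "M \<in> matchings E W B \<Longrightarrow> (w, b) \<in> M \<Longrightarrow> (w, b') \<in> M \<Longrightarrow> b = b'"
  unfolding matchings_def by blast

lemma matchings_black_eq: "M \<in> matchings E W B \<Longrightarrow> (w, b) \<in> M \<Longrightarrow> (w', b) \<in> M \<Longrightarrow> w = w'"
  unfolding matchings_def by blast

lemma matchingsI:
  "(\<And>w b. (w, b) \<in> M \<Longrightarrow> w \<in> W \<and> b \<in> B \<and> E w b) \<Longrightarrow> (\<And>w. w \<in> W \<Longrightarrow> \<exists>!b. (w, b) \<in> M)
   \<Longrightarrow> (\<And>b. b \<in> B \<Longrightarrow> \<exists>!w. (w, b) \<in> M) \<Longrightarrow> M \<in> matchings E W B"
  unfolding matchings_def by auto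

lemma matchings_Int:
  assumes M: "M \<in> matchings E W B" and "R \<subseteq> W"
  shows "M \<inter> R \<times> UNIV \<in> matchings E R (snd ` (M \<inter> R \<times> UNIV))"
proof (rule matchingsI)
  fix w assume "w \<in> R"
  then have "w \<in> W" "(w, b) \<in> M \<inter> R \<times> UNIV \<longleftrightarrow> (w, b) \<in> M" for b
    using \<open>R \<subseteq> W\<close> by auto
  with matchings_unique_white[OF M] show "\<exists>!b. (w, b) \<in> M \<inter> R \<times> UNIV" by simp
next
  fix b assume "b \<in> snd ` (M \<inter> R \<times> UNIV)"
  then obtain w where w: "(w, b) \<in> M" "w \<in> R" by auto
  then have "b \<in> B" using matchings_edge[OF M] by blast
  moreover have "(w', b) \<in> M \<inter> R \<times> UNIV \<longleftrightarrow> (w', b) \<in> M" for w'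
    using w matchings_black_eq[OF M, of w b w'] by auto
  ultimately show "\<exists>!w. (w, b) \<in> M \<inter> R \<times> UNIV" using matchings_unique_black[OF M] by simp
qed (use matchings_edge[OF M] in force)

lemma matchings_Diff:
  assumes M: "M \<in> matchings E W B"
  shows "M - R \<times> UNIV \<in> matchings E (W - R) (B - snd ` (M \<inter> R \<times> UNIV))"
proof (rule matchingsI)
  fix w b assume wb: "(w, b) \<in> M - R \<times> UNIV"
  have "b \<notin> snd ` (M \<inter> R \<times> UNIV)"
  proof
    assume "b \<in> snd ` (M \<inter> R \<times> UNIV)"
    then obtain w' where "(w', b) \<in> M" "w' \<in> R" by auto
    then show False using wb matchings_black_eq[OF M, of w' b w] by auto
  qed
  then show "w \<in> W - R \<and> b \<in> B - snd ` (M \<inter> R \<times> UNIV) \<and> E w b"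
    using wb matchings_edge[OF M] by blast
next
  fix w assume "w \<in> W - R"
  then show "\<exists>!b. (w, b) \<in> M - R \<times> UNIV" using matchings_unique_white[OF M] by auto
next
  fix b assume b: "b \<in> B - snd ` (M \<inter> R \<times> UNIV)"
  then have "(w, b) \<in> M - R \<times> UNIV \<longleftrightarrow> (w, b) \<in> M" for w by force
  with b matchings_unique_black[OF M] show "\<exists>!w. (w, b) \<in> M - R \<times> UNIV" by simp
qed

lemma matchings_Un:
  assumes M1: "M1 \<in> matchings E W1 B1" and M2: "M2 \<in> matchings E W2 B2"
    and W12: "W1 \<inter> W2 = {}" and B12: "B1 \<inter> B2 = {}"
  shows "M1 \<union> M2 \<in> matchings E (W1 \<union> W2) (B1 \<union> B2)"
proof (rule matchingsI)
  fix w b assume "(w, b) \<in> M1 \<union> M2"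
  then show "w \<in> W1 \<union> W2 \<and> b \<in> B1 \<union> B2 \<and> E w b"
    using matchings_edge[OF M1] matchings_edge[OF M2] by blast
next
  fix w assume "w \<in> W1 \<union> W2"
  then consider "w \<in> W1" "\<And>b. (w, b) \<in> M1 \<union> M2 \<longleftrightarrow> (w, b) \<in> M1"
    | "w \<in> W2" "\<And>b. (w, b) \<in> M1 \<union> M2 \<longleftrightarrow> (w, b) \<in> M2"
    using W12 matchings_edge[OF M1] matchings_edge[OF M2] by blast
  then show "\<exists>!b. (w, b) \<in> M1 \<union> M2"
    by cases (use matchings_unique_white[OF M1] matchings_unique_white[OF M2] in simp_all)
next
  fix b assume "b \<in> B1 \<union> B2"
  then consider "b \<in> B1" "\<And>w. (w, b) \<in> M1 \<union> M2 \<longleftrightarrow> (w, b) \<in> M1"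
    | "b \<in> B2" "\<And>w. (w, b) \<in> M1 \<union> M2 \<longleftrightarrow> (w, b) \<in> M2"
    using B12 matchings_edge[OF M1] matchings_edge[OF M2] by blast
  then show "\<exists>!w. (w, b) \<in> M1 \<union> M2"
    by cases (use matchings_unique_black[OF M1] matchings_unique_black[OF M2] in simp_all)
qed

definition match_sum :: "('w \<Rightarrow> 'b \<Rightarrow> bool) \<Rightarrow> ('w \<times> 'b \<Rightarrow> real) \<Rightarrow> 'w set \<Rightarrow> 'b set \<Rightarrow> real" where
  "match_sum E f W B = (\<Sum>M\<in>matchings E W B. \<Prod>e\<in>M. f e)"

lemma matchings_subset: "M \<in> matchings E W B \<Longrightarrow> M \<subseteq> W \<times> B"
  unfolding matchings_def by auto

lemma finite_matchings: "finite W \<Longrightarrow> finite B \<Longrightarrow> finite (matchings E W B)"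
  by (rule finite_subset[of _ "Pow (W \<times> B)"]) (auto dest: matchings_subset)

lemma snd_matchings: "M \<in> matchings E W B \<Longrightarrow> snd ` M = B"
  using matchings_subset[of M E W B] matchings_unique_black[of M E W B] by force

lemma match_sum_split_white:
  assumes fin: "finite W" "finite B" and "R \<subseteq> W" "N \<subseteq> B"
    and nbrs: "\<And>w b. w \<in> R \<Longrightarrow> b \<in> B \<Longrightarrow> E w b \<Longrightarrow> b \<in> N"
  shows "match_sum E f W B = (\<Sum>S\<in>Pow N. match_sum E f R S * match_sum E f (W - R) (B - S))"
proof -
  let ?A = "SIGMA S:Pow N. matchings E R S \<times> matchings E (W - R) (B - S)"
  have fin_N: "finite N" "finite R" using assms finite_subset by blast+
  have "(\<Sum>S\<in>Pow N. match_sum E f R S * match_sum E f (W - R) (B - S))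
      = (\<Sum>S\<in>Pow N. \<Sum>(M1, M2)\<in>matchings E R S \<times> matchings E (W - R) (B - S).
           prod f M1 * prod f M2)"
    unfolding match_sum_def by (simp add: sum_product sum.cartesian_product)
  also have "\<dots> = (\<Sum>(S, M1, M2)\<in>?A. prod f M1 * prod f M2)"
    using fin fin_N by (subst sum.Sigma) (auto intro!: finite_matchings dest: finite_subset)
  also have "\<dots> = match_sum E f W B"
    unfolding match_sum_def
  proof (rule sum.reindex_bij_witness[where j="\<lambda>(S, M1, M2). M1 \<union> M2"
        and i="\<lambda>M. (snd ` (M \<inter> R \<times> UNIV), M \<inter> R \<times> UNIV, M - R \<times> UNIV)"])
    fix M assume M: "M \<in> matchings E W B"
    let ?S = "snd ` (M \<inter> R \<times> UNIV)"
    have "?S \<subseteq> N" using nbrs matchings_edge[OF M] by force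
    then show "(?S, M \<inter> R \<times> UNIV, M - R \<times> UNIV) \<in> ?A"
      using matchings_Int[OF M \<open>R \<subseteq> W\<close>] matchings_Diff[OF M] by auto
  next
    fix x assume "x \<in> ?A"
    then obtain S M1 M2 where x: "x = (S, M1, M2)" and "S \<subseteq> N"
      and M1: "M1 \<in> matchings E R S" and M2: "M2 \<in> matchings E (W - R) (B - S)" by auto
    have sub: "M1 \<subseteq> R \<times> S" "M2 \<subseteq> (W - R) \<times> (B - S)"
      using matchings_subset[OF M1] matchings_subset[OF M2] .
    have "R \<union> (W - R) = W" "S \<union> (B - S) = B" using \<open>R \<subseteq> W\<close> \<open>S \<subseteq> N\<close> \<open>N \<subseteq> B\<close> by auto
    then show "(case x of (S, M1, M2) \<Rightarrow> M1 \<union> M2) \<in> matchings E W B"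
      using matchings_Un[OF M1 M2] x by auto
    show "(snd ` ((case x of (S, M1, M2) \<Rightarrow> M1 \<union> M2) \<inter> R \<times> UNIV),
        (case x of (S, M1, M2) \<Rightarrow> M1 \<union> M2) \<inter> R \<times> UNIV, (case x of (S, M1, M2) \<Rightarrow> M1 \<union> M2) - R \<times> UNIV) = x"
      using sub snd_matchings[OF M1] x by auto
    have "finite S" using \<open>S \<subseteq> N\<close> fin_N(1) by (rule finite_subset)
    then have "finite M1" "finite M2" "M1 \<inter> M2 = {}"
      using sub fin fin_N by (auto intro: finite_subset[OF _ finite_cartesian_product])
    then show "prod f (case x of (S, M1, M2) \<Rightarrow> M1 \<union> M2) = (case x of (S, M1, M2) \<Rightarrow> prod f M1 * prod f M2)"
      by (simp add: x prod.union_disjoint)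
  qed auto
  finally show ?thesis ..
qed

lemma match_sum_empty [simp]: "match_sum E f {} {} = 1"
proof -
  have "matchings E {} {} = {{}}" unfolding matchings_def by auto
  then show ?thesis unfolding match_sum_def by simp
qed

lemma match_sum_isolated_black:
  assumes "b \<in> B" and "\<And>w. w \<in> W \<Longrightarrow> \<not> E w b"
  shows "match_sum E f W B = 0"
proof -
  have "matchings E W B = {}"
  proof (rule equals0I)
    fix M assume M: "M \<in> matchings E W B"
    then obtain w where "(w, b) \<in> M" using matchings_unique_black[OF M \<open>b \<in> B\<close>] by auto
    then show False using matchings_edge[OF M] assms(2) by blast
  qed
  then show ?thesis by (simp add: match_sum_def)
qed

lemma match_sum_isolated_white:
  assumes "w \<in> W" and "\<And>b. b \<in> B \<Longrightarrow> \<not> E w b"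
  shows "match_sum E f W B = 0"
proof -
  have "matchings E W B = {}"
  proof (rule equals0I)
    fix M assume M: "M \<in> matchings E W B"
    then obtain b where "(w, b) \<in> M" using matchings_unique_white[OF M \<open>w \<in> W\<close>] by auto
    then show False using matchings_edge[OF M] assms(2) by blast
  qed
  then show ?thesis by (simp add: match_sum_def)
qed

lemma match_sum_single: "match_sum E f {w} {b} = (if E w b then f (w, b) else 0)"
proof (cases "E w b")
  case True
  have "matchings E {w} {b} = {{(w, b)}}"
  proof (intro equalityI subsetI)
    fix M assume M: "M \<in> matchings E {w} {b}"
    then have "M \<subseteq> {(w, b)}" "(w, b) \<in> M"
      using matchings_subset[OF M] matchings_unique_white[OF M, of w] by auto
    then show "M \<in> {{(w, b)}}" by auto
  qed (use True in \<open>auto intro!: matchingsI\<close>)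
  then show ?thesis using True by (simp add: match_sum_def)
qed (use match_sum_isolated_white[of w "{w}" "{b}" E f] in simp)

lemma match_sum_single_white_two:
  assumes "b1 \<in> S" "b2 \<in> S" "b1 \<noteq> b2"
  shows "match_sum E f {w} S = 0"
proof -
  have "matchings E {w} S = {}"
  proof (rule equals0I)
    fix M assume M: "M \<in> matchings E {w} S"
    obtain w1 w2 where "(w1, b1) \<in> M" "(w2, b2) \<in> M"
      using matchings_unique_black[OF M] assms by blast
    then have "(w, b1) \<in> M" "(w, b2) \<in> M" using matchings_edge[OF M] by auto
    then show False using matchings_white_eq[OF M] assms(3) by blast
  qed
  then show ?thesis by (simp add: match_sum_def)
qed

lemma match_sum_expand:
  assumes "finite W" "finite B" "w \<in> W"
  shows "match_sum E f W B = (\<Sum>b\<in>{b\<in>B. E w b}. f (w, b) * match_sum E f (W - {w}) (B - {b}))"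
proof -
  let ?N = "{b\<in>B. E w b}"
  let ?g = "\<lambda>S. match_sum E f {w} S * match_sum E f (W - {w}) (B - S)"
  have "match_sum E f W B = sum ?g (Pow ?N)"
    using assms by (intro match_sum_split_white) auto
  also have "\<dots> = sum ?g ((\<lambda>b. {b}) ` ?N)"
  proof (rule sum.mono_neutral_right)
    show "\<forall>S\<in>Pow ?N - (\<lambda>b. {b}) ` ?N. ?g S = 0"
    proof
      fix S assume S: "S \<in> Pow ?N - (\<lambda>b. {b}) ` ?N"
      show "?g S = 0"
      proof (cases "S = {}")
        case True
        then show ?thesis using match_sum_isolated_white[of w "{w}" S E f] by simp
      next
        case False
        then obtain b1 b2 where "b1 \<in> S" "b2 \<in> S" "b1 \<noteq> b2" using S by blast
        then show ?thesis using match_sum_single_white_two[of b1 S b2 E f w] by simp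
      qed
    qed
  qed (use assms in auto)
  also have "\<dots> = (\<Sum>b\<in>?N. f (w, b) * match_sum E f (W - {w}) (B - {b}))"
    by (simp add: sum.reindex match_sum_single)
  finally show ?thesis .
qed

lemma swap_matchings:
  assumes M: "M \<in> matchings E W B"
  shows "prod.swap ` M \<in> matchings (\<lambda>b w. E w b) B W"
proof -
  have mem: "(b, w) \<in> prod.swap ` M \<longleftrightarrow> (w, b) \<in> M" for b w by force
  show ?thesis
    by (rule matchingsI)
       (use matchings_edge[OF M] matchings_unique_black[OF M] matchings_unique_white[OF M] in
         \<open>simp_all only: mem\<close>)
qed

lemma match_sum_swap: "match_sum E f W B = match_sum (\<lambda>b w. E w b) (f \<circ> prod.swap) B W"
proof -
  have "bij_betw (image prod.swap) (matchings E W B) (matchings (\<lambda>b w. E w b) B W)"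
    by (rule bij_betw_byWitness[where f'="image prod.swap"])
       (auto simp: image_image dest: swap_matchings)
  then show ?thesis
    unfolding match_sum_def
    by (simp add: sum.reindex_bij_betw[symmetric] prod.reindex)
qed

lemma match_sum_split_black:
  assumes "finite W" "finite B" and "R \<subseteq> B" "N \<subseteq> W"
    and "\<And>b w. b \<in> R \<Longrightarrow> w \<in> W \<Longrightarrow> E w b \<Longrightarrow> w \<in> N"
  shows "match_sum E f W B = (\<Sum>T\<in>Pow N. match_sum E f T R * match_sum E f (W - T) (B - R))"
  unfolding match_sum_swap[of E f] using assms by (intro match_sum_split_white) auto

section \<open>Transfer between consecutive rows\<close>

text \<open>
  The two halves of the transfer between consecutive rows, scanned column by column with a
  one-bit carry.  In \<open>up_cell a s x y s'\<close>, \<open>x\<close> says whether white vertex \<open>k\<close> still has to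
  be matched upwards, \<open>y\<close> whether black vertex \<open>k\<close> of the row above gets covered, and
  \<open>s\<close>, \<open>s'\<close> whether black vertex \<open>k\<close>, resp. \<open>k + 1\<close>, is taken by white vertex \<open>k - 1\<close>,
  resp. \<open>k\<close>.  In \<open>down_cell a t y z t'\<close>, \<open>y\<close> says whether black vertex \<open>k\<close> is already
  covered, \<open>z\<close> whether white vertex \<open>k\<close> of the next row is left free, and \<open>t\<close>, \<open>t'\<close>
  whether white vertex \<open>k - 1\<close>, resp. \<open>k\<close>, is taken by black vertex \<open>k\<close>, resp. \<open>k + 1\<close>.
  Vertical edges carry the weight \<open>a\<close>.
\<close>

definition up_cell :: "real \<Rightarrow> bool \<Rightarrow> bool \<Rightarrow> bool \<Rightarrow> bool \<Rightarrow> real" where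
  "up_cell a s x y s' =
    (if (s' \<longrightarrow> x) \<and> \<not> (s \<and> x \<and> \<not> s') \<and> y = (s \<or> x \<and> \<not> s') then (if x \<and> \<not> s' then a else 1) else 0)"

definition down_cell :: "real \<Rightarrow> bool \<Rightarrow> bool \<Rightarrow> bool \<Rightarrow> bool \<Rightarrow> real" where
  "down_cell a t y z t' =
    (if (t' \<longrightarrow> \<not> z) \<and> \<not> (t \<and> \<not> z \<and> \<not> t') \<and> (\<not> y) = (t \<or> \<not> z \<and> \<not> t') then (if t' then a else 1) else 0)"

fun up_match :: "real \<Rightarrow> bool \<Rightarrow> bool list \<Rightarrow> bool list \<Rightarrow> real" where
  "up_match a s [] [y] = (if y = s then 1 else 0)"
| "up_match a s (x # xs) (y # ys) =
    up_cell a s x y False * up_match a False xs ys + up_cell a s x y True * up_match a True xs ys"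
| "up_match a s _ _ = 0"

fun down_match :: "real \<Rightarrow> bool \<Rightarrow> bool list \<Rightarrow> bool list \<Rightarrow> real" where
  "down_match a t [y] [] = (if (\<not> y) = t then 1 else 0)"
| "down_match a t (y # ys) (z # zs) =
    down_cell a t y z False * down_match a False ys zs + down_cell a t y z True * down_match a True ys zs"
| "down_match a t _ _ = 0"

lemma up_match_shift: "up_match a True X (True # Y) = up_match a False X (False # Y)"
  by (cases X; cases Y) (simp_all add: up_cell_def)

lemma down_match_shift: "down_match a True (False # Y) Z = down_match a False (True # Y) Z"
  by (cases Y; cases Z) (simp_all add: down_cell_def)

lemma up_match_True_False: "up_match a True X (False # Y) = 0"
  by (cases X; cases Y) (auto simp: up_cell_def)

lemma down_match_True_True: "down_match a True (True # Y) Z = 0"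
  by (cases Z; cases Y) (auto simp: down_cell_def)

definition bool_lists :: "nat \<Rightarrow> bool list set" where
  "bool_lists n = {xs. length xs = n}"

lemma mem_bool_lists [simp]: "xs \<in> bool_lists n \<longleftrightarrow> length xs = n"
  by (simp add: bool_lists_def)

lemma finite_bool_lists [simp]: "finite (bool_lists n)"
  using finite_lists_length_eq[of "UNIV :: bool set" n] by (simp add: bool_lists_def)

lemma bool_lists_0: "bool_lists 0 = {[]}"
  by (auto simp: bool_lists_def)

lemma sum_bool_lists_Suc:
  "(\<Sum>xs\<in>bool_lists (Suc n). f xs) = (\<Sum>xs\<in>bool_lists n. f (False # xs)) + (\<Sum>xs\<in>bool_lists n. f (True # xs))"
proof -
  have split: "bool_lists (Suc n) = (\<lambda>xs. False # xs) ` bool_lists n \<union> (\<lambda>xs. True # xs) ` bool_lists n"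
    by (auto simp: bool_lists_def length_Suc_conv image_iff)
  show ?thesis
    unfolding split by (subst sum.union_disjoint) (auto simp: sum.reindex inj_on_def)
qed

lemma sum_bool_lists_Cons: "(\<Sum>xs\<in>bool_lists (Suc n). f xs) = (\<Sum>x\<in>UNIV. \<Sum>xs\<in>bool_lists n. f (x # xs))"
  by (simp add: sum_bool_lists_Suc UNIV_bool add.commute)

definition up_down :: "real \<Rightarrow> bool \<Rightarrow> bool \<Rightarrow> bool list \<Rightarrow> bool list \<Rightarrow> real" where
  "up_down a s t xs zs = (\<Sum>ys\<in>bool_lists (Suc (length xs)). up_match a s xs ys * down_match a t ys zs)"
definition down_up :: "real \<Rightarrow> bool \<Rightarrow> bool \<Rightarrow> bool list \<Rightarrow> bool list \<Rightarrow> real" where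
  "down_up a t s xs zs = (\<Sum>ys\<in>bool_lists (length xs - 1). down_match a t xs ys * up_match a s ys zs)"

lemma up_down_Cons: "up_down a s t (x#xs) (z#zs) =
   (\<Sum>y\<in>UNIV. \<Sum>s'\<in>UNIV. \<Sum>t'\<in>UNIV. up_cell a s x y s' * down_cell a t y z t' * up_down a s' t' xs zs)"
  unfolding up_down_def
  by (simp add: sum_bool_lists_Suc UNIV_bool algebra_simps sum.distrib sum_distrib_left)

lemma up_down_Nil: "up_down a s t [] [] = (if s \<noteq> t then 1 else 0)"
  unfolding up_down_def by (simp add: sum_bool_lists_Suc bool_lists_0)

lemma down_up_Cons: "xs \<noteq> [] \<Longrightarrow> down_up a t s (x#xs) (z#zs) =
   (\<Sum>y\<in>UNIV. \<Sum>t'\<in>UNIV. \<Sum>s'\<in>UNIV. down_cell a t x y t' * up_cell a s y z s' * down_up a t' s' xs zs)"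
  unfolding down_up_def
  by (cases xs) (simp_all add: sum_bool_lists_Suc UNIV_bool algebra_simps sum.distrib sum_distrib_left)

lemma down_up_single: "down_up a t s [x] [z] = (if (\<not>x) = t \<and> z = s then 1 else 0)"
  unfolding down_up_def by (simp add: bool_lists_0)

definition commuted :: "real \<Rightarrow> bool \<Rightarrow> bool \<Rightarrow> bool list \<Rightarrow> bool list \<Rightarrow> real" where
  "commuted a s t xs zs = (if \<not>s \<and> \<not>t then (1+a^2) * down_up a False False xs zs
      else if s \<and> t then 0 else down_up a False True xs zs + a * down_up a True False xs zs)"

lemma up_down_eq_commuted: "length xs = length zs \<Longrightarrow> xs \<noteq> [] \<Longrightarrow> up_down a s t xs zs = commuted a s t xs zs"
proof (induction xs arbitrary: zs s t)
  case Nil then show ?case by simp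
next
  case (Cons x xs)
  then obtain z zs' where zs: "zs = z # zs'" by (cases zs) auto
  show ?case
  proof (cases "xs = []")
    case True
    then have "zs' = []" using Cons zs by simp
    then show ?thesis using True zs
      by (cases s; cases t; cases x; cases z)
         (simp_all add: up_down_Cons up_down_Nil commuted_def down_up_single UNIV_bool up_cell_def
            down_cell_def power2_eq_square)
  next
    case False
    have IH: "\<And>s t. up_down a s t xs zs' = commuted a s t xs zs'" using Cons zs False by simp
    show ?thesis using False unfolding zs up_down_Cons IH
      by (cases s; cases t; cases x; cases z)
         (simp_all add: commuted_def down_up_Cons UNIV_bool up_cell_def down_cell_def algebra_simps power2_eq_square)
  qed
qed

lemma sum_up_match_Cons: "(\<Sum>A\<in>bool_lists (Suc m). up_match a s (q#Qs) A * g A) =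
  (\<Sum>\<alpha>\<in>UNIV. \<Sum>\<sigma>\<in>UNIV. up_cell a s q \<alpha> \<sigma> * (\<Sum>As\<in>bool_lists m. up_match a \<sigma> Qs As * g (\<alpha>#As)))"
  by (simp add: sum_bool_lists_Cons UNIV_bool sum.distrib sum_distrib_left algebra_simps)

lemma sum_down_match_Cons_left: "(\<Sum>B\<in>bool_lists (Suc m). g B * down_match a t B (q#Qs)) =
  (\<Sum>\<beta>\<in>UNIV. \<Sum>\<tau>\<in>UNIV. down_cell a t \<beta> q \<tau> * (\<Sum>Bs\<in>bool_lists m. g (\<beta>#Bs) * down_match a \<tau> Bs Qs))"
  by (simp add: sum_bool_lists_Cons UNIV_bool sum.distrib sum_distrib_left algebra_simps)

lemma sum_down_match_Cons_right: "(\<Sum>C\<in>bool_lists (Suc m). down_match a t (y#Ys) C * g C) =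
  (\<Sum>\<gamma>\<in>UNIV. \<Sum>\<tau>\<in>UNIV. down_cell a t y \<gamma> \<tau> * (\<Sum>Cs\<in>bool_lists m. down_match a \<tau> Ys Cs * g (\<gamma>#Cs)))"
  by (simp add: sum_bool_lists_Cons UNIV_bool sum.distrib sum_distrib_left algebra_simps)

definition up_down_twice :: "real \<Rightarrow> bool \<Rightarrow> bool \<Rightarrow> bool \<Rightarrow> bool \<Rightarrow> bool list \<Rightarrow> bool list \<Rightarrow> real" where
  "up_down_twice a \<sigma> t s \<tau> xs zs = (\<Sum>Cs\<in>bool_lists (length xs). up_down a \<sigma> t xs Cs * up_down a s \<tau> Cs zs)"

definition up_up_down_down :: "real \<Rightarrow> bool \<Rightarrow> bool \<Rightarrow> bool \<Rightarrow> bool \<Rightarrow> bool list \<Rightarrow> bool list \<Rightarrow> real" where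
  "up_up_down_down a \<sigma> s t \<tau> xs zs = (\<Sum>As\<in>bool_lists (Suc (length xs)). \<Sum>Bs\<in>bool_lists (Suc (length xs)).
      up_match a \<sigma> xs As * up_down a s t As Bs * down_match a \<tau> Bs zs)"

lemma sum_up_down_up_down: "(\<Sum>As\<in>bool_lists (Suc (length xs)). \<Sum>Bs\<in>bool_lists (Suc (length xs)).
      up_match a \<sigma> xs As * down_up a t s As Bs * down_match a \<tau> Bs zs) = up_down_twice a \<sigma> t s \<tau> xs zs"
proof -
  have "(\<Sum>As\<in>bool_lists (Suc (length xs)). \<Sum>Bs\<in>bool_lists (Suc (length xs)).
      up_match a \<sigma> xs As * down_up a t s As Bs * down_match a \<tau> Bs zs) =
    (\<Sum>As\<in>bool_lists (Suc (length xs)). \<Sum>Bs\<in>bool_lists (Suc (length xs)). \<Sum>Cs\<in>bool_lists (length xs).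
      up_match a \<sigma> xs As * down_match a t As Cs * up_match a s Cs Bs * down_match a \<tau> Bs zs)"
    unfolding down_up_def
    by (intro sum.cong refl) (simp add: sum_distrib_left sum_distrib_right algebra_simps)
  also have "\<dots> = (\<Sum>Cs\<in>bool_lists (length xs). \<Sum>As\<in>bool_lists (Suc (length xs)). \<Sum>Bs\<in>bool_lists (Suc (length xs)).
      up_match a \<sigma> xs As * down_match a t As Cs * up_match a s Cs Bs * down_match a \<tau> Bs zs)"
    by (simp add: sum.swap[of _ "bool_lists (length xs)"])
  also have "\<dots> = up_down_twice a \<sigma> t s \<tau> xs zs"
    unfolding up_down_twice_def up_down_def
    by (intro sum.cong refl) (simp add: sum_distrib_left sum_distrib_right algebra_simps cong: sum.cong)
  finally show ?thesis .
qed

lemma up_up_down_down_commute: "length xs = length zs \<Longrightarrow> up_up_down_down a \<sigma> s t \<tau> xs zs =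
   (if \<not>s \<and> \<not>t then (1+a^2) * up_down_twice a \<sigma> False False \<tau> xs zs
    else if s \<and> t then 0 else up_down_twice a \<sigma> False True \<tau> xs zs + a * up_down_twice a \<sigma> True False \<tau> xs zs)"
proof -
  assume len: "length xs = length zs"
  have "up_up_down_down a \<sigma> s t \<tau> xs zs = (\<Sum>As\<in>bool_lists (Suc (length xs)). \<Sum>Bs\<in>bool_lists (Suc (length xs)).
      up_match a \<sigma> xs As * commuted a s t As Bs * down_match a \<tau> Bs zs)"
    unfolding up_up_down_down_def by (intro sum.cong refl) (subst up_down_eq_commuted, auto)
  also have "\<dots> = (if \<not>s \<and> \<not>t then (1+a^2) * up_down_twice a \<sigma> False False \<tau> xs zs
    else if s \<and> t then 0 else up_down_twice a \<sigma> False True \<tau> xs zs + a * up_down_twice a \<sigma> True False \<tau> xs zs)"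
    unfolding sum_up_down_up_down[symmetric] commuted_def
    by (simp add: sum_distrib_left sum_distrib_right sum.distrib algebra_simps)
  finally show ?thesis .
qed

text \<open>The transfer with the first black vertex of the upper row removed: the up step avoids it
  and the down step treats it as covered.\<close>

definition hole_up_down :: "real \<Rightarrow> bool list \<Rightarrow> bool list \<Rightarrow> real" where
  "hole_up_down a X X2 = (\<Sum>Yt\<in>bool_lists (length X). up_match a False X (False#Yt) * down_match a False (True#Yt) X2)"

lemma hole_up_down_Cons: "hole_up_down a (x#xs) (z#zs) = (\<Sum>s1\<in>UNIV. \<Sum>\<tau>\<in>UNIV.
    up_cell a False x False s1 * down_cell a False True z \<tau> * up_down a s1 \<tau> xs zs)"
  unfolding hole_up_down_def up_down_def
  by (simp add: UNIV_bool sum.distrib sum_distrib_left algebra_simps)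

definition up_hole_down :: "real \<Rightarrow> bool list \<Rightarrow> bool list \<Rightarrow> real" where
  "up_hole_down a Q Q2 = (\<Sum>A\<in>bool_lists (Suc (length Q)). \<Sum>B\<in>bool_lists (Suc (length Q)).
      up_match a False Q A * hole_up_down a A B * down_match a False B Q2)"

lemma up_hole_down_Cons: "up_hole_down a (q#Qs) (q2#Q2s) = (\<Sum>\<alpha>\<in>UNIV. \<Sum>\<sigma>\<in>UNIV. up_cell a False q \<alpha> \<sigma> *
   (\<Sum>\<beta>\<in>UNIV. \<Sum>s1\<in>UNIV. \<Sum>t1\<in>UNIV. \<Sum>\<tau>\<in>UNIV. down_cell a False \<beta> q2 \<tau> *
       (up_cell a False \<alpha> False s1 * down_cell a False True \<beta> t1) * up_up_down_down a \<sigma> s1 t1 \<tau> Qs Q2s))"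
proof -
  let ?m = "Suc (length Qs)"
  have "up_hole_down a (q#Qs) (q2#Q2s) = (\<Sum>A\<in>bool_lists (Suc ?m). up_match a False (q#Qs) A *
      (\<Sum>B\<in>bool_lists (Suc ?m). hole_up_down a A B * down_match a False B (q2#Q2s)))"
    unfolding up_hole_down_def by (simp add: sum_distrib_left mult.assoc)
  also have "\<dots> = (\<Sum>\<alpha>\<in>UNIV. \<Sum>\<sigma>\<in>UNIV. up_cell a False q \<alpha> \<sigma> * (\<Sum>As\<in>bool_lists ?m. up_match a \<sigma> Qs As *
      (\<Sum>B\<in>bool_lists (Suc ?m). hole_up_down a (\<alpha>#As) B * down_match a False B (q2#Q2s))))"
    by (rule sum_up_match_Cons)
  also have "\<dots> = (\<Sum>\<alpha>\<in>UNIV. \<Sum>\<sigma>\<in>UNIV. up_cell a False q \<alpha> \<sigma> * (\<Sum>As\<in>bool_lists ?m. up_match a \<sigma> Qs As *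
      (\<Sum>\<beta>\<in>UNIV. \<Sum>\<tau>\<in>UNIV. down_cell a False \<beta> q2 \<tau> * (\<Sum>Bs\<in>bool_lists ?m.
         (\<Sum>s1\<in>UNIV. \<Sum>t1\<in>UNIV. (up_cell a False \<alpha> False s1 * down_cell a False True \<beta> t1) * up_down a s1 t1 As Bs)
          * down_match a \<tau> Bs Q2s))))"
    by (simp only: sum_down_match_Cons_left hole_up_down_Cons mult.assoc)
  also have "\<dots> = (\<Sum>\<alpha>\<in>UNIV. \<Sum>\<sigma>\<in>UNIV. up_cell a False q \<alpha> \<sigma> *
   (\<Sum>\<beta>\<in>UNIV. \<Sum>s1\<in>UNIV. \<Sum>t1\<in>UNIV. \<Sum>\<tau>\<in>UNIV. down_cell a False \<beta> q2 \<tau> *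
       (up_cell a False \<alpha> False s1 * down_cell a False True \<beta> t1) * up_up_down_down a \<sigma> s1 t1 \<tau> Qs Q2s))"
    unfolding up_up_down_down_def
    by (simp add: UNIV_bool sum.distrib sum_distrib_left sum_distrib_right algebra_simps)
  finally show ?thesis .
qed

definition transfer_hole :: "real \<Rightarrow> bool list \<Rightarrow> bool list \<Rightarrow> real" where
  "transfer_hole a Q Q2 = (\<Sum>C\<in>bool_lists (length Q). up_down a False False Q C * hole_up_down a C Q2)"
definition hole_transfer :: "real \<Rightarrow> bool list \<Rightarrow> bool list \<Rightarrow> real" where
  "hole_transfer a Q Q2 = (\<Sum>C\<in>bool_lists (length Q). hole_up_down a Q C * up_down a False False C Q2)"

lemma transfer_hole_Cons: "transfer_hole a (q#Qs) (q2#Q2s) = (\<Sum>\<gamma>\<in>UNIV.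
   (\<Sum>y\<in>UNIV. \<Sum>\<sigma>\<in>UNIV. \<Sum>t1\<in>UNIV. \<Sum>s1\<in>UNIV. \<Sum>\<tau>\<in>UNIV.
      (up_cell a False q y \<sigma> * down_cell a False y \<gamma> t1) * (up_cell a False \<gamma> False s1 * down_cell a False True q2 \<tau>)
      * up_down_twice a \<sigma> t1 s1 \<tau> Qs Q2s))"
  unfolding transfer_hole_def up_down_twice_def
  by (simp add: sum_bool_lists_Cons up_down_Cons hole_up_down_Cons UNIV_bool sum.distrib
      sum_distrib_left sum_distrib_right algebra_simps)

lemma hole_transfer_Cons: "hole_transfer a (q#Qs) (q2#Q2s) = (\<Sum>\<gamma>\<in>UNIV.
   (\<Sum>y\<in>UNIV. \<Sum>\<sigma>\<in>UNIV. \<Sum>t1\<in>UNIV. \<Sum>s1\<in>UNIV. \<Sum>\<tau>\<in>UNIV.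
      (up_cell a False q False \<sigma> * down_cell a False True \<gamma> t1) * (up_cell a False \<gamma> y s1 * down_cell a False y q2 \<tau>)
      * up_down_twice a \<sigma> t1 s1 \<tau> Qs Q2s))"
  unfolding hole_transfer_def up_down_twice_def
  by (simp add: sum_bool_lists_Cons up_down_Cons hole_up_down_Cons UNIV_bool sum.distrib
      sum_distrib_left sum_distrib_right algebra_simps)

lemma up_hole_down_eq:
  "length Qs = length Q2s \<Longrightarrow>
    up_hole_down a (q#Qs) (q2#Q2s) = transfer_hole a (q#Qs) (q2#Q2s) + a * hole_transfer a (q#Qs) (q2#Q2s)"
  unfolding up_hole_down_Cons transfer_hole_Cons hole_transfer_Cons
  by (cases q; cases q2)
     (simp_all add: up_up_down_down_commute UNIV_bool up_cell_def down_cell_def algebra_simps power2_eq_square)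

lemma up_match_all_False:
  "length Cs = k \<Longrightarrow> up_match a s Cs (False # replicate k False) = (if \<not> s \<and> Cs = replicate k False then 1 else 0)"
proof (induction Cs arbitrary: k s)
  case Nil then show ?case by auto
next
  case (Cons c Cs)
  then obtain k' where k: "k = Suc k'" by auto
  show ?case using Cons.IH[of k'] Cons.prems unfolding k
    by (cases s; cases c) (auto simp: up_cell_def)
qed

lemma down_match_all_True:
  "length Cs = k \<Longrightarrow> down_match a t (True # replicate k True) Cs = (if \<not> t \<and> Cs = replicate k True then 1 else 0)"
proof (induction Cs arbitrary: k t)
  case Nil then show ?case by auto
next
  case (Cons c Cs)
  then obtain k' where k: "k = Suc k'" by auto
  show ?case using Cons.IH[of k'] Cons.prems unfolding k
    by (cases t; cases c) (auto simp: down_cell_def)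
qed

lemma down_up_all_False:
  assumes "length As = Suc k"
  shows "down_up a t s As (False # replicate k False) = (if s then 0 else down_match a t As (replicate k False))"
proof -
  have "down_up a t s As (False # replicate k False)
      = (\<Sum>Cs\<in>bool_lists k. down_match a t As Cs * (if \<not> s \<and> Cs = replicate k False then 1 else 0))"
    unfolding down_up_def using assms by (intro sum.cong) (simp_all add: up_match_all_False)
  also have "\<dots> = (if s then 0 else down_match a t As (replicate k False))"
    by (cases s) (simp_all add: if_distrib[of "\<lambda>x. _ * x"] sum.delta[of "bool_lists k"] cong: if_cong)
  finally show ?thesis .
qed

lemma down_up_all_True:
  assumes "length Bs = Suc k"
  shows "down_up a t s (True # replicate k True) Bs = (if t then 0 else up_match a s (replicate k True) Bs)"
proof -
  have "down_up a t s (True # replicate k True) Bs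
      = (\<Sum>Cs\<in>bool_lists k. (if \<not> t \<and> Cs = replicate k True then 1 else 0) * up_match a s Cs Bs)"
    unfolding down_up_def using assms by (intro sum.cong) (simp_all add: down_match_all_True)
  also have "\<dots> = (if t then 0 else up_match a s (replicate k True) Bs)"
    by (cases t) (simp_all add: if_distrib[of "\<lambda>x. x * _"] sum.delta[of "bool_lists k"] cong: if_cong)
  finally show ?thesis .
qed

definition up_hole_vacuum :: "real \<Rightarrow> bool list \<Rightarrow> real" where
  "up_hole_vacuum a Q =
    (\<Sum>A\<in>bool_lists (Suc (length Q)). up_match a False Q A * hole_up_down a A (replicate (Suc (length Q)) False))"
definition up_down_vacuum :: "real \<Rightarrow> bool \<Rightarrow> bool \<Rightarrow> bool list \<Rightarrow> real" where
  "up_down_vacuum a \<sigma> t Qs =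
    (\<Sum>As\<in>bool_lists (Suc (length Qs)). up_match a \<sigma> Qs As * down_match a t As (replicate (length Qs) False))"

lemma sum_up_up_down_vacuum:
  "(\<Sum>As\<in>bool_lists (Suc (length Qs)). up_match a \<sigma> Qs As * up_down a s t As (replicate (Suc (length Qs)) False)) =
   (if \<not>s \<and> \<not>t then (1+a^2) * up_down_vacuum a \<sigma> False Qs else if s \<and> t then 0 else a * up_down_vacuum a \<sigma> True Qs)"
proof -
  have "(\<Sum>As\<in>bool_lists (Suc (length Qs)). up_match a \<sigma> Qs As * up_down a s t As (replicate (Suc (length Qs)) False)) =
     (\<Sum>As\<in>bool_lists (Suc (length Qs)). up_match a \<sigma> Qs As * commuted a s t As (replicate (Suc (length Qs)) False))"
    by (intro sum.cong refl) (subst up_down_eq_commuted, auto)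
  also have "\<dots> = (\<Sum>As\<in>bool_lists (Suc (length Qs)). up_match a \<sigma> Qs As *
     (if \<not>s \<and> \<not>t then (1+a^2) * down_match a False As (replicate (length Qs) False) else if s \<and> t then 0
      else a * down_match a True As (replicate (length Qs) False)))"
    unfolding commuted_def by (intro sum.cong refl) (simp add: down_up_all_False)
  also have "\<dots> = (if \<not>s \<and> \<not>t then (1+a^2) * up_down_vacuum a \<sigma> False Qs
      else if s \<and> t then 0 else a * up_down_vacuum a \<sigma> True Qs)"
    unfolding up_down_vacuum_def by (simp add: sum_distrib_left algebra_simps)
  finally show ?thesis .
qed

lemma up_hole_vacuum_Cons: "up_hole_vacuum a (q#Qs) = (\<Sum>\<alpha>\<in>UNIV. \<Sum>\<sigma>\<in>UNIV. up_cell a False q \<alpha> \<sigma> *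
   (\<Sum>s1\<in>UNIV. \<Sum>t1\<in>UNIV. up_cell a False \<alpha> False s1 * down_cell a False True False t1 *
     (if \<not>s1 \<and> \<not>t1 then (1+a^2) * up_down_vacuum a \<sigma> False Qs else if s1 \<and> t1 then 0 else a * up_down_vacuum a \<sigma> True Qs)))"
proof -
  have "up_hole_vacuum a (q#Qs) = (\<Sum>\<alpha>\<in>UNIV. \<Sum>\<sigma>\<in>UNIV. up_cell a False q \<alpha> \<sigma> *
      (\<Sum>As\<in>bool_lists (Suc (length Qs)). up_match a \<sigma> Qs As *
      hole_up_down a (\<alpha>#As) (False # replicate (Suc (length Qs)) False)))"
    unfolding up_hole_vacuum_def by (simp only: length_Cons replicate_Suc sum_up_match_Cons)
  also have "\<dots> = (\<Sum>\<alpha>\<in>UNIV. \<Sum>\<sigma>\<in>UNIV. up_cell a False q \<alpha> \<sigma> *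
   (\<Sum>s1\<in>UNIV. \<Sum>t1\<in>UNIV. up_cell a False \<alpha> False s1 * down_cell a False True False t1 *
     (\<Sum>As\<in>bool_lists (Suc (length Qs)). up_match a \<sigma> Qs As * up_down a s1 t1 As (replicate (Suc (length Qs)) False))))"
    by (simp add: hole_up_down_Cons UNIV_bool sum.distrib sum_distrib_left algebra_simps)
  also have "\<dots> = (\<Sum>\<alpha>\<in>UNIV. \<Sum>\<sigma>\<in>UNIV. up_cell a False q \<alpha> \<sigma> *
   (\<Sum>s1\<in>UNIV. \<Sum>t1\<in>UNIV. up_cell a False \<alpha> False s1 * down_cell a False True False t1 *
     (if \<not>s1 \<and> \<not>t1 then (1+a^2) * up_down_vacuum a \<sigma> False Qs else if s1 \<and> t1 then 0 else a * up_down_vacuum a \<sigma> True Qs)))"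
    by (simp only: sum_up_up_down_vacuum)
  finally show ?thesis .
qed

lemma up_hole_vacuum_eq: "up_hole_vacuum a (q#Qs) = a * hole_up_down a (q#Qs) (replicate (Suc (length Qs)) False)"
proof -
  have r: "hole_up_down a (q#Qs) (replicate (Suc (length Qs)) False) = (\<Sum>s1\<in>UNIV. \<Sum>\<tau>\<in>UNIV.
    up_cell a False q False s1 * down_cell a False True False \<tau> * up_down_vacuum a s1 \<tau> Qs)"
    unfolding replicate_Suc hole_up_down_Cons up_down_vacuum_def up_down_def by simp
  show ?thesis unfolding up_hole_vacuum_Cons r
    by (cases q) (simp_all add: UNIV_bool up_cell_def down_cell_def algebra_simps power2_eq_square)
qed

definition hole_down :: "real \<Rightarrow> bool list \<Rightarrow> bool list \<Rightarrow> real" where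
  "hole_down a X Q = (\<Sum>B\<in>bool_lists (length X). hole_up_down a X B * down_match a False B Q)"
definition down_hole :: "real \<Rightarrow> bool list \<Rightarrow> bool list \<Rightarrow> real" where
  "down_hole a X Q = (\<Sum>A\<in>bool_lists (length X - 1). down_match a False X A * hole_up_down a A Q)"
definition down_up_down :: "real \<Rightarrow> bool \<Rightarrow> bool \<Rightarrow> bool \<Rightarrow> bool list \<Rightarrow> bool list \<Rightarrow> real" where
  "down_up_down a t s \<tau> Xs Qs = (\<Sum>Bs\<in>bool_lists (length Xs). down_up a t s Xs Bs * down_match a \<tau> Bs Qs)"
definition up_down_down :: "real \<Rightarrow> bool \<Rightarrow> bool \<Rightarrow> bool \<Rightarrow> bool list \<Rightarrow> bool list \<Rightarrow> real" where
  "up_down_down a s t \<tau> Xs Qs = (\<Sum>Bs\<in>bool_lists (length Xs). up_down a s t Xs Bs * down_match a \<tau> Bs Qs)"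
definition down_then_up_down :: "real \<Rightarrow> bool \<Rightarrow> bool \<Rightarrow> bool \<Rightarrow> bool list \<Rightarrow> bool list \<Rightarrow> real" where
  "down_then_up_down a t s \<tau> Xs Qs = (\<Sum>As\<in>bool_lists (length Xs - 1). down_match a t Xs As * up_down a s \<tau> As Qs)"

lemma up_down_down_commute: "Xs \<noteq> [] \<Longrightarrow> up_down_down a s t \<tau> Xs Qs =
   (if \<not>s \<and> \<not>t then (1+a^2) * down_up_down a False False \<tau> Xs Qs
    else if s \<and> t then 0 else down_up_down a False True \<tau> Xs Qs + a * down_up_down a True False \<tau> Xs Qs)"
proof -
  assume ne: "Xs \<noteq> []"
  have "up_down_down a s t \<tau> Xs Qs = (\<Sum>Bs\<in>bool_lists (length Xs). commuted a s t Xs Bs * down_match a \<tau> Bs Qs)"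
    unfolding up_down_down_def using ne by (intro sum.cong refl) (subst up_down_eq_commuted, auto)
  then show ?thesis unfolding commuted_def down_up_down_def
    by (simp add: sum_distrib_left sum_distrib_right sum.distrib algebra_simps)
qed

lemma down_up_down_assoc: "Xs \<noteq> [] \<Longrightarrow> down_then_up_down a t s \<tau> Xs Qs = down_up_down a t s \<tau> Xs Qs"
proof -
  assume ne: "Xs \<noteq> []"
  then have l: "Suc (length Xs - 1) = length Xs" by (cases Xs) auto
  have "down_then_up_down a t s \<tau> Xs Qs = (\<Sum>As\<in>bool_lists (length Xs - 1). \<Sum>Bs\<in>bool_lists (length Xs).
      down_match a t Xs As * up_match a s As Bs * down_match a \<tau> Bs Qs)"
    unfolding down_then_up_down_def up_down_def using l by (intro sum.cong refl) (simp add: sum_distrib_left mult.assoc)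
  also have "\<dots> = (\<Sum>Bs\<in>bool_lists (length Xs). \<Sum>As\<in>bool_lists (length Xs - 1).
      down_match a t Xs As * up_match a s As Bs * down_match a \<tau> Bs Qs)"
    by (rule sum.swap)
  also have "\<dots> = down_up_down a t s \<tau> Xs Qs"
    unfolding down_up_down_def down_up_def by (simp add: sum_distrib_right)
  finally show ?thesis .
qed

lemma hole_down_Cons: "hole_down a (x#Xs) (q#Qs) = (\<Sum>\<beta>\<in>UNIV. \<Sum>\<tau>\<in>UNIV. \<Sum>s1\<in>UNIV. \<Sum>t1\<in>UNIV.
    down_cell a False \<beta> q \<tau> * (up_cell a False x False s1 * down_cell a False True \<beta> t1) * up_down_down a s1 t1 \<tau> Xs Qs)"
proof -
  have "hole_down a (x#Xs) (q#Qs) = (\<Sum>\<beta>\<in>UNIV. \<Sum>\<tau>\<in>UNIV. down_cell a False \<beta> q \<tau> *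
     (\<Sum>Bs\<in>bool_lists (length Xs). hole_up_down a (x#Xs) (\<beta>#Bs) * down_match a \<tau> Bs Qs))"
    unfolding hole_down_def by (simp only: length_Cons sum_down_match_Cons_left)
  then show ?thesis unfolding hole_up_down_Cons up_down_down_def
    by (simp add: UNIV_bool sum.distrib sum_distrib_left sum_distrib_right algebra_simps)
qed

lemma down_hole_Cons: "Xs \<noteq> [] \<Longrightarrow> down_hole a (x#Xs) (q#Qs) = (\<Sum>\<alpha>\<in>UNIV. \<Sum>t\<in>UNIV. \<Sum>s\<in>UNIV. \<Sum>\<tau>\<in>UNIV.
    down_cell a False x \<alpha> t * (up_cell a False \<alpha> False s * down_cell a False True q \<tau>) * down_then_up_down a t s \<tau> Xs Qs)"
proof -
  assume ne: "Xs \<noteq> []"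
  then obtain y Ys where Xs: "Xs = y#Ys" by (cases Xs) auto
  have "down_hole a (x#y#Ys) (q#Qs) = (\<Sum>\<alpha>\<in>UNIV. \<Sum>t\<in>UNIV. down_cell a False x \<alpha> t *
     (\<Sum>As\<in>bool_lists (length Ys). down_match a t (y#Ys) As * hole_up_down a (\<alpha>#As) (q#Qs)))"
    unfolding down_hole_def by (simp only: length_Cons diff_Suc_1 sum_down_match_Cons_right)
  then show ?thesis unfolding Xs hole_up_down_Cons down_then_up_down_def
    by (simp add: UNIV_bool sum.distrib sum_distrib_left sum_distrib_right algebra_simps)
qed

lemma hole_down_True: "Xs \<noteq> [] \<Longrightarrow> hole_down a (True#Xs) (q#Qs) = down_hole a (True#Xs) (q#Qs)"
  by (simp add: hole_down_Cons down_hole_Cons up_down_down_commute down_up_down_assoc)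
     (cases q; simp add: UNIV_bool up_cell_def down_cell_def algebra_simps power2_eq_square)

lemma down_up_down_True: "down_up_down a True s \<tau> (True # replicate k True) Qs = 0"
  unfolding down_up_down_def by (intro sum.neutral) (simp add: down_up_all_True)

lemma down_up_down_False: "down_up_down a False s \<tau> (True # replicate k True) Qs = up_down a s \<tau> (replicate k True) Qs"
  unfolding down_up_down_def up_down_def by (intro sum.cong) (simp_all add: down_up_all_True)

lemma hole_down_False:
  "hole_down a (False # True # replicate k True) (q#Qs) = down_hole a (False # True # replicate k True) (q#Qs)
   + a * up_down a False False (True # replicate k True) (q#Qs)"
proof -
  have ne: "True # replicate k True \<noteq> []" by simp
  show ?thesis
    unfolding hole_down_Cons down_hole_Cons[OF ne] up_down_down_commute[OF ne] down_up_down_assoc[OF ne]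
      down_up_down_True down_up_down_False up_down_Cons
    by (cases q) (simp_all add: down_up_down_False UNIV_bool up_cell_def down_cell_def algebra_simps power2_eq_square)
qed

section \<open>Transfer operators\<close>

definition kernel_op :: "(bool list \<Rightarrow> bool list \<Rightarrow> real) \<Rightarrow> nat \<Rightarrow> (bool list \<Rightarrow> real) \<Rightarrow> bool list \<Rightarrow> real" where
  "kernel_op K m v X = (\<Sum>Y\<in>bool_lists m. K X Y * v Y)"

lemma kernel_op_cong:
  "(\<And>Y. length Y = m \<Longrightarrow> K X Y * v Y = K' X Y * v' Y) \<Longrightarrow> kernel_op K m v X = kernel_op K' m v' X"
  unfolding kernel_op_def by (intro sum.cong) auto

lemma kernel_op_scale: "kernel_op K m (\<lambda>Y. c * v Y) X = c * kernel_op K m v X"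
  unfolding kernel_op_def by (simp add: sum_distrib_left algebra_simps)

lemma kernel_op_add: "kernel_op K m (\<lambda>Y. u Y + v Y) X = kernel_op K m u X + kernel_op K m v X"
  unfolding kernel_op_def by (simp add: sum.distrib algebra_simps)

lemma kernel_op_add_kernel:
  "kernel_op K m v X + c * kernel_op L m v X = kernel_op (\<lambda>X Y. K X Y + c * L X Y) m v X"
  unfolding kernel_op_def by (simp add: sum.distrib sum_distrib_left algebra_simps)

lemma kernel_op_comp:
  "kernel_op K m (kernel_op L n v) = kernel_op (\<lambda>X Z. \<Sum>Y\<in>bool_lists m. K X Y * L Y Z) n v"
  unfolding kernel_op_def
  by (simp add: fun_eq_iff sum_distrib_left sum_distrib_right mult.assoc sum.swap[of _ "bool_lists m"])

lemma kernel_op_delta: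
  assumes "length Y0 = m" and "\<And>Y. length Y = m \<Longrightarrow> K X Y = (if Y = Y0 then c else 0)"
  shows "kernel_op K m v X = c * v Y0"
proof -
  have "kernel_op K m v X = (\<Sum>Y\<in>bool_lists m. if Y = Y0 then c * v Y0 else 0)"
    unfolding kernel_op_def using assms(2) by (intro sum.cong) auto
  then show ?thesis using assms(1) by simp
qed

definition vacuum :: "nat \<Rightarrow> bool list \<Rightarrow> real" where
  "vacuum n X = (if X = replicate n False then 1 else 0)"

lemma kernel_op_vacuum: "kernel_op K n (vacuum n) X = K X (replicate n False)"
  unfolding kernel_op_def vacuum_def
  by (simp add: if_distrib[of "\<lambda>x. _ * x"] sum.delta cong: if_cong)

abbreviation up_op :: "real \<Rightarrow> nat \<Rightarrow> (bool list \<Rightarrow> real) \<Rightarrow> bool list \<Rightarrow> real" where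
  "up_op a n \<equiv> kernel_op (up_match a False) n"

abbreviation down_op :: "real \<Rightarrow> nat \<Rightarrow> (bool list \<Rightarrow> real) \<Rightarrow> bool list \<Rightarrow> real" where
  "down_op a n \<equiv> kernel_op (down_match a False) (n - 1)"

abbreviation transfer_op :: "real \<Rightarrow> nat \<Rightarrow> (bool list \<Rightarrow> real) \<Rightarrow> bool list \<Rightarrow> real" where
  "transfer_op a n \<equiv> kernel_op (up_down a False False) n"

abbreviation hole_op :: "real \<Rightarrow> nat \<Rightarrow> (bool list \<Rightarrow> real) \<Rightarrow> bool list \<Rightarrow> real" where
  "hole_op a n \<equiv> kernel_op (hole_up_down a) n"

lemma transfer_op_eq:
  assumes "1 \<le> n" "length X = n"
  shows "transfer_op a n v X = (1 + a^2) * down_op a n (up_op a n v) X"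
proof -
  have "X \<noteq> []" using assms by auto
  then show ?thesis
    unfolding kernel_op_comp kernel_op_scale[symmetric] using assms
    by (intro kernel_op_cong) (simp add: up_down_eq_commuted commuted_def down_up_def)
qed

lemma up_down_op:
  assumes "1 \<le> n" "length Q = n - 1"
  shows "up_op a n (down_op a n w) Q = transfer_op a (n - 1) w Q"
  unfolding kernel_op_comp using assms by (intro kernel_op_cong) (simp add: up_down_def)

lemma transfer_pow_cong:
  "(\<And>X. length X = n \<Longrightarrow> v X = v' X) \<Longrightarrow> length X = n \<Longrightarrow> (transfer_op a n ^^ k) v X = (transfer_op a n ^^ k) v' X"
proof (induction k arbitrary: X)
  case (Suc k)
  then show ?case by (auto intro: kernel_op_cong)
qed simp

lemma transfer_pow_lin:
  "(transfer_op a n ^^ k) (\<lambda>Q. p * u Q + r * v Q) X = p * (transfer_op a n ^^ k) u X + r * (transfer_op a n ^^ k) v X"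
proof (induction k arbitrary: X)
  case (Suc k)
  then have "(transfer_op a n ^^ k) (\<lambda>Q. p * u Q + r * v Q)
      = (\<lambda>Q. p * (transfer_op a n ^^ k) u Q + r * (transfer_op a n ^^ k) v Q)" by auto
  then show ?case by (simp add: kernel_op_add kernel_op_scale)
qed simp

lemma transfer_pow_scale: "(transfer_op a n ^^ k) (\<lambda>Q. p * u Q) X = p * (transfer_op a n ^^ k) u X"
  using transfer_pow_lin[where r = 0 and v = u] by simp

lemma transfer_pow_eq:
  assumes "1 \<le> n" "length X = n"
  shows "(transfer_op a n ^^ Suc j) y X = (1 + a^2) ^ Suc j * down_op a n ((transfer_op a (n - 1) ^^ j) (up_op a n y)) X"
  using assms(2)
proof (induction j arbitrary: X)
  case 0
  then show ?case using assms(1) by (simp add: transfer_op_eq)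
next
  case (Suc j)
  let ?c = "1 + a^2" and ?w = "(transfer_op a (n - 1) ^^ j) (up_op a n y)"
  have "up_op a n ((transfer_op a n ^^ Suc j) y) Q = ?c ^ Suc j * transfer_op a (n - 1) ?w Q"
    if "length Q = n - 1" for Q
  proof -
    have "up_op a n ((transfer_op a n ^^ Suc j) y) Q = up_op a n (\<lambda>X. ?c ^ Suc j * down_op a n ?w X) Q"
      by (rule kernel_op_cong) (simp add: Suc.IH del: funpow.simps)
    also have "\<dots> = ?c ^ Suc j * transfer_op a (n - 1) ?w Q"
      unfolding kernel_op_scale using up_down_op[OF assms(1) that] by simp
    finally show ?thesis .
  qed
  then have "down_op a n (up_op a n ((transfer_op a n ^^ Suc j) y)) X
      = down_op a n (\<lambda>Q. ?c ^ Suc j * transfer_op a (n - 1) ?w Q) X"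
    by (intro kernel_op_cong) simp
  then show ?case
    using Suc.prems assms(1) by (simp add: transfer_op_eq kernel_op_scale)
qed

lemma up_op_vacuum:
  assumes "1 \<le> n" "length Q = n - 1"
  shows "up_op a n (vacuum n) Q = vacuum (n - 1) Q"
proof -
  obtain m where "n = Suc m" using assms(1) by (cases n) auto
  then show ?thesis using up_match_all_False[of Q m a False] assms(2)
    by (simp add: kernel_op_vacuum vacuum_def)
qed

lemma up_hole_down_op:
  assumes "2 \<le> n" "length Q = n - 1"
  shows "up_op a n (hole_op a n (down_op a n w)) Q
    = transfer_op a (n - 1) (hole_op a (n - 1) w) Q + a * hole_op a (n - 1) (transfer_op a (n - 1) w) Q"
proof -
  obtain q Qs where Q: "Q = q # Qs" using assms by (cases Q) auto
  have "up_hole_down a Q Z = transfer_hole a Q Z + a * hole_transfer a Q Z" if "length Z = n - 1" for Z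
    using that assms(2) up_hole_down_eq[of Qs _ a q] unfolding Q by (cases Z) auto
  then show ?thesis
    unfolding kernel_op_comp kernel_op_add_kernel using assms
    by (intro kernel_op_cong)
       (simp add: up_hole_down_def transfer_hole_def hole_transfer_def sum_distrib_left mult.assoc)
qed

lemma up_hole_vacuum_op:
  assumes "2 \<le> n" "length Q = n - 1"
  shows "up_op a n (hole_op a n (vacuum n)) Q = a * hole_op a (n - 1) (vacuum (n - 1)) Q"
proof -
  obtain q Qs where Q: "Q = q # Qs" using assms by (cases Q) auto
  with assms have n: "n = Suc (Suc (length Qs))" by auto
  show ?thesis
    using up_hole_vacuum_eq[of a q Qs]
    by (simp add: Q n kernel_op_comp kernel_op_vacuum up_hole_vacuum_def)
qed

lemma hole_down_op:
  assumes "length X = n"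
  shows "hole_op a n (down_op a n w) X = kernel_op (hole_down a) (n - 1) w X"
    and "down_op a n (hole_op a (n - 1) w) X = kernel_op (down_hole a) (n - 1) w X"
  unfolding kernel_op_comp using assms
  by (auto intro!: kernel_op_cong simp: hole_down_def down_hole_def)

lemma hole_down_op_True:
  assumes "2 \<le> n" "length Xs = n - 1"
  shows "hole_op a n (down_op a n w) (True # Xs) = down_op a n (hole_op a (n - 1) w) (True # Xs)"
proof -
  have "Xs \<noteq> []" using assms by auto
  then have "hole_down a (True # Xs) Q = down_hole a (True # Xs) Q" if "length Q = n - 1" for Q
    using that assms hole_down_True[of Xs a] by (cases Q) auto
  then show ?thesis
    using assms by (simp add: hole_down_op cong: kernel_op_cong)
qed

lemma hole_down_op_False:
  assumes "2 \<le> n"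
  shows "hole_op a n (down_op a n w) (False # replicate (n - 1) True)
    = down_op a n (hole_op a (n - 1) w) (False # replicate (n - 1) True)
      + a * transfer_op a (n - 1) w (replicate (n - 1) True)"
proof -
  obtain k where k: "n - 1 = Suc k" using assms by (cases "n - 1") auto
  have "hole_down a (False # replicate (n - 1) True) Q
      = down_hole a (False # replicate (n - 1) True) Q + a * up_down a False False (replicate (n - 1) True) Q"
    if "length Q = n - 1" for Q
    using that hole_down_False[of a k] unfolding k by (cases Q) auto
  moreover have "transfer_op a (n - 1) w (replicate (n - 1) True)
      = kernel_op (\<lambda>_. up_down a False False (replicate (n - 1) True)) (n - 1) w (False # replicate (n - 1) True)"
    by (simp add: kernel_op_def)
  ultimately show ?thesis
    using assms by (simp add: hole_down_op kernel_op_add_kernel cong: kernel_op_cong)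
qed

abbreviation hole_row :: "nat \<Rightarrow> nat \<Rightarrow> bool list" where
  "hole_row i r \<equiv> replicate i True @ False # replicate r True"

lemma down_match_hole_row: "length Q = i + r \<Longrightarrow> down_match a t (hole_row i r) Q =
 (if t then (if i = 0 \<and> Q = replicate r True then 1 else 0)
  else (if 0 < r \<and> Q = hole_row i (r-1) then 1 else 0) + (if 0 < i \<and> Q = hole_row (i-1) r then a else 0))"
proof (induction i arbitrary: Q t)
  case 0
  show ?case
  proof (cases r)
    case 0 then show ?thesis using "0.prems" by simp
  next
    case (Suc r')
    then obtain q Qs where Q: "Q = q#Qs" and lQs: "length Qs = r'" using "0.prems" by (cases Q) auto
    have d: "down_match a t (hole_row 0 r) Q = (if t = q \<and> Qs = replicate r' True then 1 else 0)"
      unfolding Q Suc using down_match_all_True[OF lQs, of a]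
      by (cases t; cases q) (simp_all add: down_cell_def)
    show ?thesis unfolding d using Suc Q by auto
  qed
next
  case (Suc i)
  then obtain q Qs where Q: "Q = q#Qs" and lQs: "length Qs = i + r" by (cases Q) auto
  have IH: "\<And>t. down_match a t (hole_row i r) Qs = (if t then (if i = 0 \<and> Qs = replicate r True then 1 else 0)
    else (if 0 < r \<and> Qs = hole_row i (r-1) then 1 else 0) + (if 0 < i \<and> Qs = hole_row (i-1) r then a else 0))"
    using Suc.IH lQs by blast
  have d: "down_match a t (hole_row (Suc i) r) Q = (if t then 0
      else if q then down_match a False (hole_row i r) Qs else a * down_match a True (hole_row i r) Qs)"
    unfolding Q by (cases t; cases q) (simp_all add: down_cell_def)
  show ?case unfolding d IH unfolding Q
    by (cases t; cases q; cases i) auto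
qed

lemma down_op_hole_row:
  assumes "n = Suc (i + r)"
  shows "down_op a n u (hole_row i r)
    = (if 0 < r then u (hole_row i (r - 1)) else 0) + (if 0 < i then a * u (hole_row (i - 1) r) else 0)"
proof -
  let ?Q1 = "hole_row i (r - 1)" and ?Q2 = "hole_row (i - 1) r"
  have "down_op a n u (hole_row i r)
      = (\<Sum>Q\<in>bool_lists (i + r). (if 0 < r \<and> Q = ?Q1 then u ?Q1 else 0) + (if 0 < i \<and> Q = ?Q2 then a * u ?Q2 else 0))"
    unfolding kernel_op_def assms by (intro sum.cong) (auto simp: down_match_hole_row distrib_right)
  also have "\<dots> = (if 0 < r then u ?Q1 else 0) + (if 0 < i then a * u ?Q2 else 0)"
    by (simp add: sum.distrib)
  finally show ?thesis .
qed

lemma down_op_all_True: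
  assumes "1 \<le> n"
  shows "down_op a n u (replicate n True) = u (replicate (n - 1) True)"
proof -
  obtain m where "n = Suc m" using assms by (cases n) auto
  then show ?thesis
    using kernel_op_delta[of "replicate m True" m "down_match a False" "replicate n True" 1 u]
    by (simp add: down_match_all_True)
qed

definition vacuum_state :: "real \<Rightarrow> nat \<Rightarrow> nat \<Rightarrow> bool list \<Rightarrow> real" where
  "vacuum_state a n k = (transfer_op a n ^^ k) (vacuum n)"

definition hole_state :: "real \<Rightarrow> nat \<Rightarrow> nat \<Rightarrow> bool list \<Rightarrow> real" where
  "hole_state a n j = (transfer_op a n ^^ j) (hole_op a n (vacuum_state a n (n - 1 - j)))"

definition aztec_pf :: "real \<Rightarrow> nat \<Rightarrow> real" where
  "aztec_pf a n = vacuum_state a n n (replicate n True)"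

lemma vacuum_state_Suc: "vacuum_state a n (Suc m) = transfer_op a n (vacuum_state a n m)"
  by (simp add: vacuum_state_def)

lemma vacuum_state_Suc_down:
  assumes "1 \<le> n" "length X = n"
  shows "vacuum_state a n (Suc m) X = (1 + a^2) ^ Suc m * down_op a n (vacuum_state a (n - 1) m) X"
  unfolding vacuum_state_def transfer_pow_eq[OF assms] using assms(1)
  by (auto intro!: kernel_op_cong transfer_pow_cong simp: up_op_vacuum)

lemma aztec_pf_0: "aztec_pf a 0 = 1"
  by (simp add: aztec_pf_def vacuum_state_def vacuum_def)

lemma aztec_pf_rec:
  assumes "1 \<le> n"
  shows "aztec_pf a n = (1 + a^2) ^ n * aztec_pf a (n - 1)"
proof -
  obtain m where "n = Suc m" using assms by (cases n) auto
  then show ?thesis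
    unfolding aztec_pf_def using vacuum_state_Suc_down[OF assms, of "replicate n True" a m]
      down_op_all_True[OF assms, of a "vacuum_state a m m"]
    by simp
qed

lemma hole_op_vacuum_state:
  assumes "1 \<le> n"
  shows "hole_op a n (vacuum_state a n (Suc m)) X
    = (1 + a^2) ^ Suc m * hole_op a n (down_op a n (vacuum_state a (n - 1) m)) X"
proof -
  have "hole_op a n (vacuum_state a n (Suc m)) X
      = hole_op a n (\<lambda>Y. (1 + a^2) ^ Suc m * down_op a n (vacuum_state a (n - 1) m) Y) X"
    using assms by (intro kernel_op_cong) (simp add: vacuum_state_Suc_down)
  then show ?thesis by (simp only: kernel_op_scale)
qed

lemma hole_state_mid:
  assumes "2 \<le> n" "1 \<le> j" "j \<le> n - 2" "length X = n"
  shows "hole_state a n j X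
    = (1 + a^2) ^ (n - 1) * down_op a n (\<lambda>Q. hole_state a (n - 1) j Q + a * hole_state a (n - 1) (j - 1) Q) X"
proof -
  obtain m where m: "n - 1 - j = Suc m" using assms by (cases "n - 1 - j") auto
  obtain j' where j': "j = Suc j'" using assms by (cases j) auto
  let ?c = "1 + a^2" and ?T = "transfer_op a (n - 1)"
  let ?y = "hole_op a n (down_op a n (vacuum_state a (n - 1) m))"
  have "hole_state a n j X = (transfer_op a n ^^ j) (\<lambda>X. ?c ^ Suc m * ?y X) X"
    unfolding hole_state_def m using assms by (intro transfer_pow_cong) (simp_all add: hole_op_vacuum_state)
  also have "\<dots> = ?c ^ Suc m * (?c ^ Suc j' * down_op a n ((?T ^^ j') (up_op a n ?y)) X)"
    using assms unfolding j' by (simp only: transfer_pow_scale transfer_pow_eq)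
  also have "(?T ^^ j') (up_op a n ?y) Q = hole_state a (n - 1) j Q + a * hole_state a (n - 1) (j - 1) Q"
    if "length Q = n - 1" for Q
  proof -
    have "(?T ^^ j') (up_op a n ?y) Q = (?T ^^ j')
        (\<lambda>Q. 1 * ?T (hole_op a (n - 1) (vacuum_state a (n - 1) m)) Q
          + a * hole_op a (n - 1) (vacuum_state a (n - 1) (Suc m)) Q) Q"
      using assms that
      by (intro transfer_pow_cong) (use up_hole_down_op[OF assms(1)] in \<open>simp_all add: vacuum_state_Suc\<close>)
    also have "\<dots> = (?T ^^ Suc j') (hole_op a (n - 1) (vacuum_state a (n - 1) m)) Q
        + a * (?T ^^ j') (hole_op a (n - 1) (vacuum_state a (n - 1) (Suc m))) Q"
      by (subst transfer_pow_lin) (simp add: funpow_swap1)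
    also have "\<dots> = hole_state a (n - 1) j Q + a * hole_state a (n - 1) (j - 1) Q"
    proof -
      have "n - 1 - 1 - j = m" "n - 1 - 1 - (j - 1) = Suc m" using m j' by auto
      then show ?thesis unfolding hole_state_def j' by simp
    qed
    finally show ?thesis .
  qed
  then have "down_op a n ((?T ^^ j') (up_op a n ?y)) X
      = down_op a n (\<lambda>Q. hole_state a (n - 1) j Q + a * hole_state a (n - 1) (j - 1) Q) X"
    by (intro kernel_op_cong) simp
  moreover have "?c ^ Suc m * ?c ^ Suc j' = ?c ^ (n - 1)"
  proof -
    have "Suc m + Suc j' = n - 1" using m j' assms by auto
    then show ?thesis by (metis power_add)
  qed
  ultimately show ?thesis by (metis (no_types, lifting) mult.assoc)
qed

lemma hole_state_last:
  assumes "2 \<le> n" "length X = n"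
  shows "hole_state a n (n - 1) X = (1 + a^2) ^ (n - 1) * (a * down_op a n (hole_state a (n - 1) (n - 2)) X)"
proof -
  obtain j where j: "n - 1 = Suc j" using assms by (cases "n - 1") auto
  let ?T = "transfer_op a (n - 1)"
  have "(?T ^^ j) (up_op a n (hole_op a n (vacuum n))) Q = a * hole_state a (n - 1) (n - 2) Q"
    if "length Q = n - 1" for Q
  proof -
    have "(?T ^^ j) (up_op a n (hole_op a n (vacuum n))) Q = (?T ^^ j) (\<lambda>Q. a * hole_op a (n - 1) (vacuum (n - 1)) Q) Q"
      using assms that by (intro transfer_pow_cong) (use up_hole_vacuum_op[OF assms(1)] in simp_all)
    moreover have "n - 2 = j" using j by simp
    ultimately show ?thesis by (simp add: transfer_pow_scale hole_state_def vacuum_state_def)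
  qed
  then have "down_op a n ((?T ^^ j) (up_op a n (hole_op a n (vacuum n)))) X
      = down_op a n (\<lambda>Q. a * hole_state a (n - 1) (n - 2) Q) X"
    by (intro kernel_op_cong) simp
  then show ?thesis
    using transfer_pow_eq[where j = j and y = "hole_op a n (vacuum n)"] assms j
    by (simp add: hole_state_def vacuum_state_def kernel_op_scale)
qed

lemma hole_state_0:
  assumes "2 \<le> n"
  shows "hole_state a n 0 X = (1 + a^2) ^ (n - 1) * hole_op a n (down_op a n (vacuum_state a (n - 1) (n - 2))) X"
proof -
  have "n - 1 = Suc (n - 2)" using assms by auto
  then show ?thesis unfolding hole_state_def using hole_op_vacuum_state[of n a "n - 2" X] assms by simp
qed

lemma hole_state_0_True:
  assumes "2 \<le> n" "length Xs = n - 1"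
  shows "hole_state a n 0 (True # Xs) = (1 + a^2) ^ (n - 1) * down_op a n (hole_state a (n - 1) 0) (True # Xs)"
  using hole_state_0[OF assms(1)] hole_down_op_True[OF assms] by (simp add: hole_state_def numeral_2_eq_2)

lemma hole_state_0_False:
  assumes "2 \<le> n"
  shows "hole_state a n 0 (False # replicate (n - 1) True)
    = (1 + a^2) ^ (n - 1)
      * (down_op a n (hole_state a (n - 1) 0) (False # replicate (n - 1) True) + a * aztec_pf a (n - 1))"
proof -
  have "n - 1 = Suc (n - 2)" using assms by auto
  then have "transfer_op a (n - 1) (vacuum_state a (n - 1) (n - 2)) (replicate (n - 1) True) = aztec_pf a (n - 1)"
    unfolding aztec_pf_def by (metis vacuum_state_Suc)
  then show ?thesis
    using hole_state_0[OF assms] hole_down_op_False[OF assms] by (simp add: hole_state_def numeral_2_eq_2)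
qed

lemma hole_state_rec:
  assumes "2 \<le> n" "i < n" "j < n"
  shows "hole_state a n j (hole_row i (n - 1 - i)) = (1 + a^2) ^ (n - 1) *
    (down_op a n (\<lambda>Q. (if j < n - 1 then hole_state a (n - 1) j Q else 0)
        + (if 0 < j then a * hole_state a (n - 1) (j - 1) Q else 0)) (hole_row i (n - 1 - i))
     + (if i = 0 \<and> j = 0 then a * aztec_pf a (n - 1) else 0))"
proof -
  have len: "length (hole_row i (n - 1 - i)) = n" using assms by simp
  consider "j = 0" | "1 \<le> j" "j \<le> n - 2" | "j = n - 1" using assms by linarith
  then show ?thesis
  proof cases
    case 1
    show ?thesis
    proof (cases i)
      case 0
      then show ?thesis using hole_state_0_False[OF assms(1)] \<open>j = 0\<close> assms by simp
    next
      case (Suc i')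
      then have "hole_row i (n - 1 - i) = True # hole_row i' (n - 1 - i)" by simp
      then show ?thesis
        using hole_state_0_True[OF assms(1), of "hole_row i' (n - 1 - i)"] \<open>j = 0\<close> Suc assms by simp
    qed
  next
    case 2
    then have "j < n - 1" "0 < j" by auto
    then show ?thesis using hole_state_mid[OF assms(1) 2 len] by simp
  next
    case 3
    then show ?thesis using hole_state_last[OF assms(1) len] assms by (simp add: kernel_op_scale numeral_2_eq_2)
  qed
qed

definition hole_pf :: "real \<Rightarrow> nat \<Rightarrow> nat \<Rightarrow> nat \<Rightarrow> real" where
  "hole_pf a n i j = hole_state a n j (hole_row i (n - 1 - i))"

lemma hole_pf_1: "hole_pf a 1 0 0 = a"
  by (simp add: hole_pf_def hole_state_def vacuum_state_def kernel_op_vacuum hole_up_down_def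
      sum_bool_lists_Suc bool_lists_0 up_cell_def down_cell_def)

lemma hole_pf_rec:
  assumes "2 \<le> n" "i < n" "j < n"
  shows "hole_pf a n i j = (1 + a^2) ^ (n - 1) *
    ((if i < n - 1 \<and> j < n - 1 then hole_pf a (n - 1) i j else 0)
     + (if 0 < i \<and> j < n - 1 then a * hole_pf a (n - 1) (i - 1) j else 0)
     + (if i < n - 1 \<and> 0 < j then a * hole_pf a (n - 1) i (j - 1) else 0)
     + (if 0 < i \<and> 0 < j then a^2 * hole_pf a (n - 1) (i - 1) (j - 1) else 0)
     + (if i = 0 \<and> j = 0 then a * aztec_pf a (n - 1) else 0))"
proof -
  have n: "n = Suc (i + (n - 1 - i))" using assms by auto
  have "n - 1 - i - 1 = n - 1 - 1 - i" "0 < i \<Longrightarrow> n - 1 - i = n - 1 - 1 - (i - 1)" using assms by auto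
  then show ?thesis
    unfolding hole_pf_def hole_state_rec[OF assms] down_op_hole_row[OF n] using assms
    by (auto simp: algebra_simps power2_eq_square)
qed

section \<open>Rows of the Aztec diamond\<close>

definition select :: "(nat \<Rightarrow> 'a) \<Rightarrow> bool list \<Rightarrow> 'a set" where
  "select f X = f ` {k. k < length X \<and> X ! k}"

lemma select_Nil [simp]: "select f [] = {}"
  by (simp add: select_def)

lemma select_Cons: "select f (x # X) = (if x then insert (f 0) else id) (select (f \<circ> Suc) X)"
  unfolding select_def by (auto simp: less_Suc_eq_0_disj image_iff)

lemma finite_select [simp]: "finite (select f X)"
  by (simp add: select_def)

lemma select_replicate_True: "select f (replicate n True) = f ` {..<n}"
  by (auto simp: select_def)

lemma mem_select_iff: "inj f \<Longrightarrow> f k \<in> select f X \<longleftrightarrow> k < length X \<and> X ! k"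
  by (auto simp: select_def dest: injD)

lemma select_map_Not: "inj f \<Longrightarrow> length X = n \<Longrightarrow> f ` {..<n} - select f X = select f (map Not X)"
  by (auto simp: select_def inj_image_mem_iff dest: injD)

lemma bij_betw_select: "inj f \<Longrightarrow> bij_betw (select f) (bool_lists n) (Pow (f ` {..<n}))"
proof (rule bij_betw_imageI)
  assume "inj f"
  show "inj_on (select f) (bool_lists n)"
  proof (rule inj_onI)
    fix X X' assume X: "X \<in> bool_lists n" "X' \<in> bool_lists n" "select f X = select f X'"
    show "X = X'"
    proof (rule nth_equalityI)
      fix k assume "k < length X"
      then show "X ! k = X' ! k"
        using X mem_select_iff[OF \<open>inj f\<close>, of k X] mem_select_iff[OF \<open>inj f\<close>, of k X'] by auto
    qed (use X in simp)
  qed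
  show "select f ` bool_lists n = Pow (f ` {..<n})"
  proof (intro equalityI subsetI)
    fix S assume "S \<in> Pow (f ` {..<n})"
    then have "select f (map (\<lambda>k. f k \<in> S) [0..<n]) = S" by (auto simp: select_def)
    then show "S \<in> select f ` bool_lists n"
      by (metis imageI length_map length_upt mem_bool_lists minus_nat.diff_0)
  qed (auto simp: select_def)
qed

lemma sum_Pow_select:
  "inj f \<Longrightarrow> (\<Sum>S\<in>Pow (f ` {..<n}). g S) = (\<Sum>X\<in>bool_lists n. g (select f X))"
  using sum.reindex_bij_betw[OF bij_betw_select] by metis

definition adj :: "int \<times> int \<Rightarrow> int \<times> int \<Rightarrow> bool" where
  "adj w b \<longleftrightarrow> horiz_step w b \<or> vert_step w b"

definition pf :: "real \<Rightarrow> (int \<times> int) set \<Rightarrow> (int \<times> int) set \<Rightarrow> real" where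
  "pf a W B = match_sum adj (edge_weight 1 a) W B"

lemma partition_fn_eq_pf: "partition_fn W B 1 a = pf a W B"
  unfolding partition_fn_def perfect_matchings_def az_edges_def pf_def match_sum_def matchings_def adj_def
  by simp

definition white_row :: "nat \<Rightarrow> nat \<Rightarrow> bool list \<Rightarrow> (int \<times> int) set" where
  "white_row p q = select (\<lambda>k. (2 * int (p + k) + 1, 2 * int q))"

definition black_row :: "nat \<Rightarrow> nat \<Rightarrow> bool list \<Rightarrow> (int \<times> int) set" where
  "black_row p q = select (\<lambda>k. (2 * int (p + k), 2 * int q + 1))"

lemma inj_white_vertex: "inj (\<lambda>k. (2 * int (p + k) + 1, 2 * int q))"
  by (auto intro: injI)

lemma inj_black_vertex: "inj (\<lambda>k. (2 * int (p + k), 2 * int q + 1))"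
  by (auto intro: injI)

lemma white_row_Nil [simp]: "white_row p q [] = {}" and black_row_Nil [simp]: "black_row p q [] = {}"
  by (simp_all add: white_row_def black_row_def)

lemma finite_white_row [simp]: "finite (white_row p q X)" and finite_black_row [simp]: "finite (black_row p q Y)"
  by (simp_all add: white_row_def black_row_def)

lemma white_row_Cons: "white_row p q (x # X)
    = (if x then insert (2 * int p + 1, 2 * int q) (white_row (Suc p) q X) else white_row (Suc p) q X)"
  by (simp add: white_row_def select_Cons comp_def algebra_simps)

lemma black_row_Cons: "black_row p q (y # Y)
    = (if y then insert (2 * int p, 2 * int q + 1) (black_row (Suc p) q Y) else black_row (Suc p) q Y)"
  by (simp add: black_row_def select_Cons comp_def algebra_simps)

lemma mem_white_row_iff:
  "(u, v) \<in> white_row p q X \<longleftrightarrow> (\<exists>k<length X. X ! k \<and> u = 2 * int (p + k) + 1) \<and> v = 2 * int q"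
  by (auto simp: white_row_def select_def)

lemma mem_black_row_iff:
  "(u, v) \<in> black_row p q Y \<longleftrightarrow> (\<exists>k<length Y. Y ! k \<and> u = 2 * int (p + k)) \<and> v = 2 * int q + 1"
  by (auto simp: black_row_def select_def)

lemma mem_white_row: "(u, v) \<in> white_row p q X \<Longrightarrow> v = 2 * int q \<and> u \<ge> 2 * int p + 1"
  by (auto simp: mem_white_row_iff)

lemma mem_black_row: "(u, v) \<in> black_row p q Y \<Longrightarrow> v = 2 * int q + 1 \<and> u \<ge> 2 * int p"
  by (auto simp: mem_black_row_iff)

lemma adj_iff: "adj (u,v) (u',v') \<longleftrightarrow> (u' - u = 1 \<or> u' - u = -1) \<and> (v' - v = 1 \<or> v' - v = -1)"
  unfolding adj_def horiz_step_def vert_step_def by auto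

lemma pf_expand: "w \<in> W \<Longrightarrow> finite W \<Longrightarrow> finite B \<Longrightarrow>
   pf a W B = (\<Sum>b\<in>{b\<in>B. adj w b}. edge_weight 1 a (w,b) * pf a (W-{w}) (B-{b}))"
  unfolding pf_def by (rule match_sum_expand)

lemma pf_isolated_black: "b \<in> B \<Longrightarrow> (\<And>w. w \<in> W \<Longrightarrow> \<not> adj w b) \<Longrightarrow> pf a W B = 0"
  unfolding pf_def by (rule match_sum_isolated_black)

lemma pf_empty [simp]: "pf a {} {} = 1"
  unfolding pf_def by simp

lemma pf_empty_black [simp]: "pf a {} {b} = 0"
  by (rule pf_isolated_black) auto

lemma sum_if_singletons: "b0 \<noteq> b1 \<Longrightarrow> (\<Sum>b\<in>(if y then {b0} else {}) \<union> (if y' then {b1} else {}). g b) =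
   (if y then g b0 else 0) + (if y' then g b1 else 0)"
  by (cases y; cases y') (auto simp: add.commute)

lemma black_row_Cons_True_Diff: "black_row p q (True#Y) - {(2 * int p, 2 * int q + 1)} = black_row (Suc p) q Y"
proof -
  have "(2 * int p, 2 * int q + 1) \<notin> black_row (Suc p) q Y" by (auto dest!: mem_black_row)
  then show ?thesis by (simp add: black_row_Cons)
qed

lemma black_row_Cons_False: "black_row p q (False # Y) = black_row (Suc p) q Y"
  by (simp add: black_row_Cons)

lemma black_row_Cons_True_mem: "(2 * int p, 2 * int q + 1) \<in> black_row p q (True # Y)"
  by (simp add: black_row_Cons)

lemma not_adj_white_row_Suc: "w \<in> white_row (Suc p) q X \<Longrightarrow> \<not> adj w (2 * int p, v)"
  by (cases w) (auto simp: adj_iff dest!: mem_white_row)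

lemma adj_black_row_Cons_Cons:
  assumes "v = 2 * int q \<or> v = 2 * int q + 2"
  shows "{b \<in> black_row p q (y # y' # Y). adj (2 * int p + 1, v) b}
      = (if y then {(2 * int p, 2 * int q + 1)} else {}) \<union> (if y' then {(2 * int p + 2, 2 * int q + 1)} else {})"
proof -
  have "\<not> adj (2 * int p + 1, v) b" if "b \<in> black_row (Suc (Suc p)) q Y" for b
    using that by (cases b) (auto simp: adj_iff dest!: mem_black_row)
  then show ?thesis using assms by (auto simp: black_row_Cons adj_iff)
qed

lemma pf_expand_row:
  assumes "v = 2 * int q \<or> v = 2 * int q + 2" and "w = (2 * int p + 1, v)" and "w \<notin> W" "finite W"
    and "B = black_row p q (y # y' # Y)"
    and "b0 = (2 * int p, 2 * int q + 1)" and "b1 = (2 * int p + 2, 2 * int q + 1)"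
  shows "pf a (insert w W) B = (if y then edge_weight 1 a (w, b0) * pf a W (B - {b0}) else 0)
    + (if y' then edge_weight 1 a (w, b1) * pf a W (B - {b1}) else 0)"
proof -
  have "pf a (insert w W) B = (\<Sum>b\<in>{b\<in>B. adj w b}. edge_weight 1 a (w, b) * pf a W (B - {b}))"
    using pf_expand[of w "insert w W" B a] assms(3,4,5) by simp
  then show ?thesis
    using adj_black_row_Cons_Cons[OF assms(1)] assms(2,5-7) by (simp add: sum_if_singletons)
qed

lemma pf_up_row:
  "length Y = Suc (length X) \<Longrightarrow> pf a (white_row p q X) (black_row p q Y) = up_match a False X Y"
proof (induction X arbitrary: p Y)
  case Nil
  then obtain y where "Y = [y]" by (auto simp: length_Suc_conv)
  then show ?case by (cases y) (simp_all add: black_row_Cons)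
next
  case (Cons x X)
  then obtain y y' Y' where Y: "Y = y # y' # Y'" and "length Y' = length X"
    by (auto simp: length_Suc_conv)
  then have IH: "pf a (white_row (Suc p) q X) (black_row (Suc p) q (y'' # Y')) = up_match a False X (y'' # Y')"
    for y'' using Cons.IH by simp
  let ?w = "(2 * int p + 1, 2 * int q)"
    and ?b0 = "(2 * int p, 2 * int q + 1)" and ?b1 = "(2 * int p + 2, 2 * int q + 1)"
  have b0_isolated: "pf a (white_row (Suc p) q X) B = 0" if "?b0 \<in> B" for B
    using that not_adj_white_row_Suc by (intro pf_isolated_black) blast+
  show ?case
  proof (cases x)
    case False
    then show ?thesis unfolding Y
      by (cases y) (simp_all add: white_row_Cons black_row_Cons_False black_row_Cons_True_mem
          b0_isolated IH up_cell_def)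
  next
    case True
    have "black_row p q (True # y' # Y') - {?b0} = black_row (Suc p) q (y' # Y')"
      using black_row_Cons_True_Diff[of p q "y' # Y'"] by simp
    moreover have "black_row p q (False # True # Y') - {?b1} = black_row (Suc p) q (False # Y')"
      using black_row_Cons_True_Diff[of "Suc p" q Y'] by (simp add: black_row_Cons algebra_simps)
    moreover have "pf a (white_row p q (True # X)) (black_row p q Y)
      = (if y then edge_weight 1 a (?w, ?b0) * pf a (white_row (Suc p) q X) (black_row p q Y - {?b0}) else 0)
      + (if y' then edge_weight 1 a (?w, ?b1) * pf a (white_row (Suc p) q X) (black_row p q Y - {?b1}) else 0)"
      unfolding white_row_Cons if_True by (rule pf_expand_row) (auto simp: Y dest: mem_white_row)
    moreover have "edge_weight 1 a (?w, ?b0) = a" "edge_weight 1 a (?w, ?b1) = 1"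
      by (simp_all add: edge_weight_def horiz_step_def)
    ultimately show ?thesis using True unfolding Y
      by (cases y; cases y')
         (simp_all add: b0_isolated black_row_Cons_True_mem IH up_cell_def up_match_shift
           up_match_True_False)
  qed
qed

lemma pf_down_row:
  "length Y = Suc (length Z) \<Longrightarrow>
    pf a (white_row p (Suc q) Z) (black_row p q Y) = down_match a False (map Not Y) (map Not Z)"
proof (induction Z arbitrary: p Y)
  case Nil
  then obtain y where "Y = [y]" by (auto simp: length_Suc_conv)
  then show ?case by (cases y) (simp_all add: black_row_Cons)
next
  case (Cons z Z)
  then obtain y y' Y' where Y: "Y = y # y' # Y'" and "length Y' = length Z"
    by (auto simp: length_Suc_conv)
  then have IH: "pf a (white_row (Suc p) (Suc q) Z) (black_row (Suc p) q (y'' # Y'))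
      = down_match a False (map Not (y'' # Y')) (map Not Z)" for y''
    using Cons.IH by simp
  let ?w = "(2 * int p + 1, 2 * int (Suc q))"
    and ?b0 = "(2 * int p, 2 * int q + 1)" and ?b1 = "(2 * int p + 2, 2 * int q + 1)"
  have b0_isolated: "pf a (white_row (Suc p) (Suc q) Z) B = 0" if "?b0 \<in> B" for B
    using that not_adj_white_row_Suc by (intro pf_isolated_black) blast+
  show ?case
  proof (cases z)
    case False
    then show ?thesis unfolding Y
      by (cases y) (simp_all add: white_row_Cons black_row_Cons_False black_row_Cons_True_mem
          b0_isolated IH down_cell_def)
  next
    case True
    have "black_row p q (True # y' # Y') - {?b0} = black_row (Suc p) q (y' # Y')"
      using black_row_Cons_True_Diff[of p q "y' # Y'"] by simp
    moreover have "black_row p q (False # True # Y') - {?b1} = black_row (Suc p) q (False # Y')"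
      using black_row_Cons_True_Diff[of "Suc p" q Y'] by (simp add: black_row_Cons algebra_simps)
    moreover have "pf a (white_row p (Suc q) (True # Z)) (black_row p q Y)
      = (if y then edge_weight 1 a (?w, ?b0) * pf a (white_row (Suc p) (Suc q) Z) (black_row p q Y - {?b0}) else 0)
      + (if y' then edge_weight 1 a (?w, ?b1) * pf a (white_row (Suc p) (Suc q) Z) (black_row p q Y - {?b1}) else 0)"
      unfolding white_row_Cons if_True by (rule pf_expand_row) (auto simp: Y dest: mem_white_row)
    moreover have "edge_weight 1 a (?w, ?b0) = 1" "edge_weight 1 a (?w, ?b1) = a"
      by (simp_all add: edge_weight_def horiz_step_def)
    ultimately show ?thesis using True unfolding Y
      by (cases y; cases y')
         (simp_all add: b0_isolated black_row_Cons_True_mem IH down_cell_def down_match_shift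
           down_match_True_True)
  qed
qed

section \<open>Peeling the diamond row by row\<close>

lemma odd_between_iff: "(odd (x::int) \<and> 1 \<le> x \<and> x \<le> 2 * int n - 1) \<longleftrightarrow> (\<exists>k<n. x = 2 * int k + 1)"
proof
  assume h: "odd x \<and> 1 \<le> x \<and> x \<le> 2 * int n - 1"
  then obtain y where y: "x = 2 * y + 1" by (meson oddE)
  then have "0 \<le> y" "y < int n" using h by auto
  then show "\<exists>k<n. x = 2 * int k + 1" using y by (intro exI[of _ "nat y"]) auto
qed auto

lemma even_between_iff: "(even (x::int) \<and> 0 \<le> x \<and> x \<le> 2 * int n) \<longleftrightarrow> (\<exists>k\<le>n. x = 2 * int k)"
proof
  assume h: "even x \<and> 0 \<le> x \<and> x \<le> 2 * int n"
  then obtain y where y: "x = 2 * y" by (meson evenE)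
  then have "0 \<le> y" "y \<le> int n" using h by auto
  then show "\<exists>k\<le>n. x = 2 * int k" using y by (intro exI[of _ "nat y"]) auto
qed auto

lemma mem_aztec_white: "(x1, x2) \<in> aztec_white n \<longleftrightarrow> (\<exists>k<n. x1 = 2 * int k + 1) \<and> (\<exists>q\<le>n. x2 = 2 * int q)"
  unfolding aztec_white_def using odd_between_iff[of x1 n] even_between_iff[of x2 n] by auto

lemma mem_aztec_black: "(x1, x2) \<in> aztec_black n \<longleftrightarrow> (\<exists>k\<le>n. x1 = 2 * int k) \<and> (\<exists>q<n. x2 = 2 * int q + 1)"
  unfolding aztec_black_def using odd_between_iff[of x2 n] even_between_iff[of x1 n] by auto

lemma finite_aztec_white: "finite (aztec_white n)"
  by (rule finite_subset[of _ "{1..2 * int n - 1} \<times> {0..2 * int n}"]) (auto simp: aztec_white_def)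

lemma finite_aztec_black: "finite (aztec_black n)"
  by (rule finite_subset[of _ "{0..2 * int n} \<times> {1..2 * int n - 1}"]) (auto simp: aztec_black_def)

definition white_above :: "nat \<Rightarrow> nat \<Rightarrow> (int \<times> int) set" where
  "white_above n m = {p \<in> aztec_white n. 2 * int m \<le> snd p}"

definition black_above :: "nat \<Rightarrow> nat \<Rightarrow> (int \<times> int) set" where
  "black_above n m = {p \<in> aztec_black n. 2 * int m \<le> snd p}"

definition full_white_row :: "nat \<Rightarrow> nat \<Rightarrow> (int \<times> int) set" where
  "full_white_row n q = white_row 0 q (replicate n True)"

definition full_black_row :: "nat \<Rightarrow> nat \<Rightarrow> (int \<times> int) set" where
  "full_black_row n q = black_row 0 q (replicate (Suc n) True)"

lemma finite_white_above [simp]: "finite (white_above n m)"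
  using finite_aztec_white by (simp add: white_above_def)

lemma finite_black_above [simp]: "finite (black_above n m)"
  using finite_aztec_black by (simp add: black_above_def)

lemma mem_full_white_row: "(x1, x2) \<in> full_white_row n q \<longleftrightarrow> (\<exists>k<n. x1 = 2 * int k + 1) \<and> x2 = 2 * int q"
  by (auto simp: full_white_row_def mem_white_row_iff)

lemma mem_full_black_row: "(x1, x2) \<in> full_black_row n q \<longleftrightarrow> (\<exists>k\<le>n. x1 = 2 * int k) \<and> x2 = 2 * int q + 1"
  by (auto simp: full_black_row_def mem_black_row_iff less_Suc_eq_le simp del: replicate_Suc)

lemma white_above_0: "white_above n 0 = aztec_white n"
  by (auto simp: white_above_def aztec_white_def)

lemma black_above_0: "black_above n 0 = aztec_black n"
  by (auto simp: black_above_def aztec_black_def)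

lemma white_above_top: "white_above n (Suc n) = {}"
  by (auto simp: white_above_def mem_aztec_white)

lemma black_above_top: "black_above n n = {}"
  by (auto simp: black_above_def mem_aztec_black)

lemma white_above_split:
  "m \<le> n \<Longrightarrow> white_above n m = full_white_row n m \<union> white_above n (Suc m)"
  "full_white_row n m \<inter> white_above n (Suc m) = {}"
  by (auto simp: white_above_def mem_aztec_white mem_full_white_row)

lemma black_above_split:
  "m < n \<Longrightarrow> black_above n m = full_black_row n m \<union> black_above n (Suc m)"
  "full_black_row n m \<inter> black_above n (Suc m) = {}"
  by (auto simp: black_above_def mem_aztec_black mem_full_black_row)

lemma full_white_row_Diff: "length X = n \<Longrightarrow> full_white_row n q - white_row 0 q X = white_row 0 q (map Not X)"
  unfolding full_white_row_def white_row_def select_replicate_True by (rule select_map_Not[OF inj_white_vertex])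

lemma full_black_row_Diff: "length Y = Suc n \<Longrightarrow> full_black_row n q - black_row 0 q Y = black_row 0 q (map Not Y)"
  unfolding full_black_row_def black_row_def select_replicate_True by (rule select_map_Not[OF inj_black_vertex])

lemma full_black_row_Diff_first: "full_black_row n q - {(0, 2 * int q + 1)} = black_row (Suc 0) q (replicate n True)"
  using black_row_Cons_True_Diff[of 0 q "replicate n True"] by (simp add: full_black_row_def)

lemma sum_Pow_full_black_row:
  "(\<Sum>S\<in>Pow (full_black_row n q). g S) = (\<Sum>Y\<in>bool_lists (Suc n). g (black_row 0 q Y))"
  unfolding full_black_row_def black_row_def select_replicate_True by (rule sum_Pow_select[OF inj_black_vertex])

lemma sum_Pow_full_black_row_Diff_first:
  "(\<Sum>S\<in>Pow (full_black_row n q - {(0, 2 * int q + 1)}). g S) = (\<Sum>Y\<in>bool_lists n. g (black_row 0 q (False # Y)))"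
  unfolding full_black_row_Diff_first black_row_Cons_False
  unfolding black_row_def select_replicate_True by (rule sum_Pow_select[OF inj_black_vertex])

lemma sum_Pow_full_white_row:
  "(\<Sum>T\<in>Pow (full_white_row n q). g T) = (\<Sum>X\<in>bool_lists n. g (white_row 0 q (map Not X)))"
proof -
  have "(\<Sum>T\<in>Pow (full_white_row n q). g T) = (\<Sum>X\<in>bool_lists n. g (white_row 0 q X))"
    unfolding full_white_row_def white_row_def select_replicate_True by (rule sum_Pow_select[OF inj_white_vertex])
  also have "\<dots> = (\<Sum>X\<in>bool_lists n. g (white_row 0 q (map Not X)))"
    by (rule sum.reindex_bij_witness[of _ "map Not" "map Not"]) (auto simp: comp_def)
  finally show ?thesis .
qed

lemma adj_white_row_black_above:
  assumes "w \<in> white_row 0 m X" "b \<in> black_above n m" "adj w b"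
  shows "b \<in> full_black_row n m"
proof -
  obtain u v u' v' where w: "w = (u, v)" and b: "b = (u', v')" by (cases w, cases b)
  have "v = 2 * int m" using assms(1) w by (simp add: mem_white_row_iff)
  moreover obtain k q where "k \<le> n" "u' = 2 * int k" "v' = 2 * int q + 1" "2 * int m \<le> v'"
    using assms(2) b by (auto simp: black_above_def mem_aztec_black)
  moreover have "v' - v = 1 \<or> v' - v = -1" using assms(3) w b by (simp add: adj_iff)
  ultimately show ?thesis using b by (auto simp: mem_full_black_row)
qed

lemma adj_full_black_row_white_above:
  assumes "b \<in> full_black_row n m" "w \<in> white_above n (Suc m)" "adj w b"
  shows "w \<in> full_white_row n (Suc m)"
proof -
  obtain u v u' v' where w: "w = (u, v)" and b: "b = (u', v')" by (cases w, cases b)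
  have "v' = 2 * int m + 1" using assms(1) b by (simp add: mem_full_black_row)
  moreover obtain k q where "k < n" "u = 2 * int k + 1" "v = 2 * int q" "2 * int (Suc m) \<le> v"
    using assms(2) w by (auto simp: white_above_def mem_aztec_white)
  moreover have "v' - v = 1 \<or> v' - v = -1" using assms(3) w b by (simp add: adj_iff)
  ultimately show ?thesis using w by (auto simp: mem_full_white_row)
qed

definition upper_pf :: "real \<Rightarrow> nat \<Rightarrow> (int \<times> int) set \<Rightarrow> nat \<Rightarrow> bool list \<Rightarrow> real" where
  "upper_pf a n K m X = pf a (white_row 0 m X \<union> white_above n (Suc m)) (black_above n m - K)"

lemma upper_pf_peel_white_row:
  assumes "m < n" "length X = n"
  shows "upper_pf a n K m X = (\<Sum>S\<in>Pow (full_black_row n m - K).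
    pf a (white_row 0 m X) S * pf a (white_above n (Suc m)) (black_above n m - K - S))"
proof -
  have "white_row 0 m X \<subseteq> full_white_row n m"
    using assms(2) by (auto simp: full_white_row_def mem_white_row_iff)
  then have "white_row 0 m X \<inter> white_above n (Suc m) = {}" using white_above_split(2) by blast
  then have "white_row 0 m X \<union> white_above n (Suc m) - white_row 0 m X = white_above n (Suc m)" by blast
  moreover have "full_black_row n m \<subseteq> black_above n m" using black_above_split(1)[OF assms(1)] by blast
  moreover have "upper_pf a n K m X = (\<Sum>S\<in>Pow (full_black_row n m - K). pf a (white_row 0 m X) S
      * pf a (white_row 0 m X \<union> white_above n (Suc m) - white_row 0 m X) (black_above n m - K - S))"
    unfolding upper_pf_def pf_def
    by (rule match_sum_split_white)
       (use \<open>full_black_row n m \<subseteq> black_above n m\<close> in \<open>auto dest: adj_white_row_black_above\<close>)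
  ultimately show ?thesis by simp
qed

lemma upper_pf_peel_black_row:
  assumes "m < n" "S \<subseteq> full_black_row n m - K"
  shows "pf a (white_above n (Suc m)) (black_above n m - K - S)
    = (\<Sum>X\<in>bool_lists n. pf a (white_row 0 (Suc m) (map Not X)) (full_black_row n m - K - S) * upper_pf a n K (Suc m) X)"
proof -
  let ?R = "full_black_row n m - K - S" and ?N = "full_white_row n (Suc m)"
  have W: "white_above n (Suc m) = ?N \<union> white_above n (Suc (Suc m))" "?N \<inter> white_above n (Suc (Suc m)) = {}"
    using assms(1) white_above_split[where m = "Suc m" and n = n] by auto
  have B: "black_above n m = full_black_row n m \<union> black_above n (Suc m)"
    "full_black_row n m \<inter> black_above n (Suc m) = {}"
    using black_above_split[where m = m and n = n] assms(1) by auto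
  have "pf a (white_above n (Suc m)) (black_above n m - K - S)
      = (\<Sum>T\<in>Pow ?N. pf a T ?R * pf a (white_above n (Suc m) - T) (black_above n m - K - S - ?R))"
    unfolding pf_def
  proof (rule match_sum_split_black)
    show "?R \<subseteq> black_above n m - K - S" "?N \<subseteq> white_above n (Suc m)" using W(1) B(1) by auto
  qed (auto dest: adj_full_black_row_white_above)
  also have "\<dots> = (\<Sum>T\<in>Pow ?N. pf a T ?R * pf a (?N - T \<union> white_above n (Suc (Suc m))) (black_above n (Suc m) - K))"
  proof (intro sum.cong refl)
    fix T assume "T \<in> Pow ?N"
    then have "white_above n (Suc m) - T = ?N - T \<union> white_above n (Suc (Suc m))" using W by auto
    moreover have "black_above n m - K - S - ?R = black_above n (Suc m) - K" using B assms(2) by auto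
    ultimately show "pf a T ?R * pf a (white_above n (Suc m) - T) (black_above n m - K - S - ?R)
        = pf a T ?R * pf a (?N - T \<union> white_above n (Suc (Suc m))) (black_above n (Suc m) - K)" by simp
  qed
  also have "\<dots> = (\<Sum>X\<in>bool_lists n. pf a (white_row 0 (Suc m) (map Not X)) ?R * upper_pf a n K (Suc m) X)"
    unfolding sum_Pow_full_white_row upper_pf_def
    by (intro sum.cong refl) (simp add: full_white_row_Diff comp_def)
  finally show ?thesis .
qed

lemma black_row_subset_full: "length Y = Suc n \<Longrightarrow> black_row 0 q Y \<subseteq> full_black_row n q"
  by (auto simp: mem_black_row_iff mem_full_black_row)

lemma upper_pf_step:
  assumes "m < n" "length X = n" "K \<inter> full_black_row n m = {}"
  shows "upper_pf a n K m X = transfer_op a n (upper_pf a n K (Suc m)) X"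
proof -
  have K: "full_black_row n m - K = full_black_row n m" using assms(3) by auto
  have "upper_pf a n K m X = (\<Sum>Y\<in>bool_lists (Suc n). up_match a False X Y
      * (\<Sum>X2\<in>bool_lists n. down_match a False Y X2 * upper_pf a n K (Suc m) X2))"
    unfolding upper_pf_peel_white_row[OF assms(1,2)] K sum_Pow_full_black_row
  proof (intro sum.cong refl)
    fix Y :: "bool list" assume "Y \<in> bool_lists (Suc n)"
    then have Y: "length Y = Suc n" by simp
    have "pf a (white_row 0 (Suc m) (map Not X2)) (full_black_row n m - K - black_row 0 m Y) = down_match a False Y X2"
      if "length X2 = n" for X2
      using that Y pf_down_row[of "map Not Y" "map Not X2" a 0 m] by (simp add: K full_black_row_Diff comp_def)
    then show "pf a (white_row 0 m X) (black_row 0 m Y)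
        * pf a (white_above n (Suc m)) (black_above n m - K - black_row 0 m Y)
        = up_match a False X Y * (\<Sum>X2\<in>bool_lists n. down_match a False Y X2 * upper_pf a n K (Suc m) X2)"
      using Y assms(2) black_row_subset_full[OF Y]
      by (simp add: pf_up_row upper_pf_peel_black_row[OF assms(1)] K)
  qed
  also have "\<dots> = up_op a (Suc n) (down_op a (Suc n) (upper_pf a n K (Suc m))) X"
    by (simp add: kernel_op_def)
  also have "\<dots> = transfer_op a n (upper_pf a n K (Suc m)) X"
    using up_down_op[of "Suc n" X a] assms(2) by simp
  finally show ?thesis .
qed

lemma upper_pf_step_hole:
  assumes "m < n" "length X = n" "K \<inter> full_black_row n m = {(0, 2 * int m + 1)}"
  shows "upper_pf a n K m X = hole_op a n (upper_pf a n K (Suc m)) X"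
proof -
  let ?b0 = "(0::int, 2 * int m + 1)"
  have K: "full_black_row n m - K = full_black_row n m - {?b0}" using assms(3) by auto
  have "upper_pf a n K m X = (\<Sum>Y\<in>bool_lists n. up_match a False X (False # Y)
      * (\<Sum>X2\<in>bool_lists n. down_match a False (True # Y) X2 * upper_pf a n K (Suc m) X2))"
    unfolding upper_pf_peel_white_row[OF assms(1,2)] K sum_Pow_full_black_row_Diff_first
  proof (intro sum.cong refl)
    fix Y :: "bool list" assume "Y \<in> bool_lists n"
    then have Y: "length Y = n" by simp
    have "?b0 \<notin> black_row 0 m (False # Y)" by (auto simp: black_row_Cons_False dest: mem_black_row)
    then have sub: "black_row 0 m (False # Y) \<subseteq> full_black_row n m - K"
      using K black_row_subset_full[of "False # Y" n m] Y by auto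
    have "full_black_row n m - K - black_row 0 m (False # Y) = (full_black_row n m - black_row 0 m (False # Y)) - {?b0}"
      using K by blast
    also have "\<dots> = black_row 0 m (True # map Not Y) - {?b0}"
      using full_black_row_Diff[of "False # Y" n m] Y by simp
    also have "\<dots> = black_row 0 m (False # map Not Y)"
      using black_row_Cons_True_Diff[of 0 m "map Not Y"] by (simp add: black_row_Cons_False)
    finally have "pf a (white_row 0 (Suc m) (map Not X2)) (full_black_row n m - K - black_row 0 m (False # Y))
        = down_match a False (True # Y) X2" if "length X2 = n" for X2
      using that Y pf_down_row[of "False # map Not Y" "map Not X2" a 0 m] by (simp add: comp_def)
    then show "pf a (white_row 0 m X) (black_row 0 m (False # Y))
        * pf a (white_above n (Suc m)) (black_above n m - K - black_row 0 m (False # Y))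
        = up_match a False X (False # Y) * (\<Sum>X2\<in>bool_lists n. down_match a False (True # Y) X2 * upper_pf a n K (Suc m) X2)"
      using Y assms(2) by (simp add: pf_up_row upper_pf_peel_black_row[OF assms(1) sub])
  qed
  also have "\<dots> = hole_op a n (upper_pf a n K (Suc m)) X"
    using kernel_op_comp[of "\<lambda>X Y. up_match a False X (False # Y)" n "\<lambda>Y. down_match a False (True # Y)" n]
    by (simp add: kernel_op_def hole_up_down_def assms(2) fun_eq_iff)
  finally show ?thesis .
qed

lemma upper_pf_top:
  assumes "length X = n"
  shows "upper_pf a n K n X = vacuum n X"
proof (cases "X = replicate n False")
  case True
  then have "white_row 0 n X = {}" by (auto simp: white_row_def select_def)
  with True show ?thesis by (simp add: upper_pf_def white_above_top black_above_top vacuum_def)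
next
  case False
  then obtain k where "k < n" "X ! k" using assms by (metis in_set_conv_nth replicate_eqI)
  then have "(2 * int k + 1, 2 * int n) \<in> white_row 0 n X" using assms by (auto simp: mem_white_row_iff)
  then have "pf a (white_row 0 n X) {} = 0" unfolding pf_def by (rule match_sum_isolated_white) simp
  then show ?thesis using False by (simp add: upper_pf_def white_above_top black_above_top vacuum_def)
qed

lemma upper_pf_pow:
  assumes "m \<le> j" "j \<le> n" "length X = n" and "\<And>r. m \<le> r \<Longrightarrow> r < j \<Longrightarrow> K \<inter> full_black_row n r = {}"
  shows "upper_pf a n K m X = (transfer_op a n ^^ (j - m)) (upper_pf a n K j) X"
  using assms
proof (induction "j - m" arbitrary: m X)
  case (Suc d)
  then have "upper_pf a n K m X = transfer_op a n (upper_pf a n K (Suc m)) X"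
    by (intro upper_pf_step) auto
  also have "\<dots> = transfer_op a n ((transfer_op a n ^^ d) (upper_pf a n K j)) X"
  proof (rule kernel_op_cong)
    fix Y :: "bool list" assume Y: "length Y = n"
    have d: "d = j - Suc m" "Suc m \<le> j" using Suc.hyps(2) by arith+
    have "upper_pf a n K (Suc m) Y = (transfer_op a n ^^ (j - Suc m)) (upper_pf a n K j) Y"
      by (rule Suc.hyps(1)) (use d Y Suc.prems in auto)
    then have "upper_pf a n K (Suc m) Y = (transfer_op a n ^^ d) (upper_pf a n K j) Y"
      using d(1) by simp
    then show "up_down a False False X Y * upper_pf a n K (Suc m) Y
        = up_down a False False X Y * (transfer_op a n ^^ d) (upper_pf a n K j) Y" by simp
  qed
  also have "\<dots> = (transfer_op a n ^^ (j - m)) (upper_pf a n K j) X"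
    using Suc.hyps(2) by (metis comp_apply funpow.simps(2))
  finally show ?case .
qed simp

lemma upper_pf_no_hole:
  assumes "m \<le> n" "length X = n"
  shows "upper_pf a n {} m X = vacuum_state a n (n - m) X"
proof -
  have "upper_pf a n {} m X = (transfer_op a n ^^ (n - m)) (upper_pf a n {} n) X"
    using assms by (intro upper_pf_pow) auto
  also have "\<dots> = (transfer_op a n ^^ (n - m)) (vacuum n) X"
    using assms(2) by (intro transfer_pow_cong) (simp_all add: upper_pf_top)
  finally show ?thesis by (simp add: vacuum_state_def)
qed

lemma upper_pf_hole_below: "j < m \<Longrightarrow> upper_pf a n {(0, 2 * int j + 1)} m X = upper_pf a n {} m X"
  by (auto simp: upper_pf_def black_above_def intro!: arg_cong[where f = "pf a _"])

lemma upper_pf_hole: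
  assumes "j < n" "length X = n"
  shows "upper_pf a n {(0, 2 * int j + 1)} 0 X = hole_state a n j X"
proof -
  let ?K = "{(0::int, 2 * int j + 1)}"
  have "upper_pf a n ?K j Y = hole_op a n (vacuum_state a n (n - 1 - j)) Y" if "length Y = n" for Y
  proof -
    have "upper_pf a n ?K j Y = hole_op a n (upper_pf a n ?K (Suc j)) Y"
      using assms that by (intro upper_pf_step_hole) (auto simp: mem_full_black_row)
    also have "\<dots> = hole_op a n (vacuum_state a n (n - 1 - j)) Y"
      using assms by (intro kernel_op_cong) (simp add: upper_pf_hole_below upper_pf_no_hole)
    finally show ?thesis .
  qed
  moreover have "upper_pf a n ?K 0 X = (transfer_op a n ^^ j) (upper_pf a n ?K j) X"
    using upper_pf_pow[where m = 0 and j = j and K = ?K] assms by (auto simp: mem_full_black_row)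
  ultimately show ?thesis
    unfolding hole_state_def using assms(2) by (simp cong: transfer_pow_cong)
qed

lemma aztec_white_eq: "aztec_white n = full_white_row n 0 \<union> white_above n 1"
  using white_above_split(1)[of 0 n] by (simp add: white_above_0)

lemma Zn_eq_aztec_pf: "Zn n 1 a = aztec_pf a n"
proof -
  have "Zn n 1 a = upper_pf a n {} 0 (replicate n True)"
    unfolding Zn_def partition_fn_eq_pf upper_pf_def aztec_white_eq black_above_0 full_white_row_def by simp
  then show ?thesis by (simp add: upper_pf_no_hole aztec_pf_def)
qed

lemma nth_hole_row: "k < i + Suc r \<Longrightarrow> hole_row i r ! k \<longleftrightarrow> k \<noteq> i"
  by (auto simp: nth_append nth_Cons split: nat.split)

lemma Zrem_eq_hole_pf:
  assumes "i < n" "j < n"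
  shows "Zrem (int i) (int j) 1 a n = hole_pf a n i j"
proof -
  let ?X = "hole_row i (n - 1 - i)" and ?f = "\<lambda>k::nat. (2 * int k + 1, 0::int)"
  have "inj ?f" by (auto intro: injI)
  have "white_row 0 0 ?X = ?f ` {k. k < length ?X \<and> ?X ! k}"
    by (simp add: white_row_def select_def)
  also have "{k. k < length ?X \<and> ?X ! k} = {..<n} - {i}"
  proof (intro set_eqI)
    fix k show "k \<in> {k. k < length ?X \<and> ?X ! k} \<longleftrightarrow> k \<in> {..<n} - {i}"
      using assms(1) nth_hole_row[of k i "n - 1 - i"] by auto
  qed
  also have "?f ` ({..<n} - {i}) = ?f ` {..<n} - {?f i}"
    by (simp add: image_set_diff[OF \<open>inj ?f\<close>])
  also have "?f ` {..<n} = full_white_row n 0"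
    by (simp add: full_white_row_def white_row_def select_replicate_True)
  finally have row: "white_row 0 0 ?X = full_white_row n 0 - {(2 * int i + 1, 0)}" .
  have "(2 * int i + 1, 0) \<notin> white_above n 1" by (simp add: white_above_def)
  then have white: "aztec_white n - {(2 * int i + 1, 0)} = white_row 0 0 ?X \<union> white_above n 1"
    unfolding aztec_white_eq row by blast
  have "Zrem (int i) (int j) 1 a n = pf a (aztec_white n - {(2 * int i + 1, 0)}) (aztec_black n - {(0, 2 * int j + 1)})"
    unfolding Zrem_def partition_fn_eq_pf using assms by simp
  also have "\<dots> = upper_pf a n {(0, 2 * int j + 1)} 0 ?X"
    by (simp only: upper_pf_def white black_above_0 One_nat_def[symmetric])
  also have "\<dots> = hole_pf a n i j"
    unfolding hole_pf_def using assms by (intro upper_pf_hole) auto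
  finally show ?thesis .
qed

section \<open>The recursion\<close>

lemma aztec_pf_pos: "0 < aztec_pf a n"
proof (induction n)
  case (Suc n)
  then show ?case using aztec_pf_rec[of "Suc n" a] by (simp add: add_pos_nonneg)
qed (simp add: aztec_pf_0)

lemma Zn_rec: "1 \<le> n \<Longrightarrow> Zn n 1 a = (1 + a^2) ^ n * Zn (n - 1) 1 a"
  by (simp add: Zn_eq_aztec_pf aztec_pf_rec)

lemma Zrem_diff_eq:
  "Zrem (int i - int k) (int j - int l) 1 a m
    = (if k \<le> i \<and> l \<le> j \<and> i - k < m \<and> j - l < m then hole_pf a m (i - k) (j - l) else 0)"
proof (cases "k \<le> i \<and> l \<le> j")
  case True
  then have "int i - int k = int (i - k)" "int j - int l = int (j - l)" by auto
  then show ?thesis using True Zrem_eq_hole_pf[of "i - k" m "j - l" a] by (auto simp: Zrem_def)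
qed (auto simp: Zrem_def)

lemma Zrem_rec:
  assumes "1 \<le> n" "i < n" "j < n"
  shows "Zrem (int i) (int j) 1 a n = (1 + a^2) ^ (n - 1) *
    (Zrem (int i) (int j) 1 a (n - 1) + a * Zrem (int i - 1) (int j) 1 a (n - 1)
     + a * Zrem (int i) (int j - 1) 1 a (n - 1) + a^2 * Zrem (int i - 1) (int j - 1) 1 a (n - 1)
     + (if i = 0 \<and> j = 0 then a * Zn (n - 1) 1 a else 0))"
proof (cases "n = 1")
  case True
  then have "i = 0" "j = 0" using assms by auto
  moreover have "Zrem 0 0 1 a 1 = a" using Zrem_eq_hole_pf[of 0 1 0 a] hole_pf_1[of a] by simp
  moreover have "Zrem x y 1 a 0 = 0" for x y by (simp add: Zrem_def)
  ultimately show ?thesis using True by (simp add: Zn_eq_aztec_pf aztec_pf_0)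
next
  case False
  then have "2 \<le> n" using assms(1) by simp
  have "Zrem (int i) (int j) 1 a (n - 1) = (if i < n - 1 \<and> j < n - 1 then hole_pf a (n - 1) i j else 0)"
    using Zrem_diff_eq[of i 0 j 0 a "n - 1"] by simp
  moreover have "Zrem (int i - 1) (int j) 1 a (n - 1) = (if 0 < i \<and> j < n - 1 then hole_pf a (n - 1) (i - 1) j else 0)"
    using Zrem_diff_eq[of i 1 j 0 a "n - 1"] assms(2) by auto
  moreover have "Zrem (int i) (int j - 1) 1 a (n - 1) = (if i < n - 1 \<and> 0 < j then hole_pf a (n - 1) i (j - 1) else 0)"
    using Zrem_diff_eq[of i 0 j 1 a "n - 1"] assms(3) by auto
  moreover have "Zrem (int i - 1) (int j - 1) 1 a (n - 1) = (if 0 < i \<and> 0 < j then hole_pf a (n - 1) (i - 1) (j - 1) else 0)"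
    using Zrem_diff_eq[of i 1 j 1 a "n - 1"] assms(2,3) by auto
  ultimately show ?thesis
    unfolding Zrem_eq_hole_pf[OF assms(2,3)] hole_pf_rec[OF \<open>2 \<le> n\<close> assms(2,3)] Zn_eq_aztec_pf
    by simp
qed

lemma sum_index_pairs:
  "(\<Sum>(k, l)\<in>{(k, l). k \<in> {0::nat, 1} \<and> l \<in> {0::nat, 1} \<and> (int i - int k, int j - int l) \<noteq> (-1, -1)}. g k l)
    = g 0 0 + g 0 1 + g 1 0 + (if i = 0 \<and> j = 0 then 0 else g 1 1)"
proof -
  have "{(k, l). k \<in> {0::nat, 1} \<and> l \<in> {0::nat, 1} \<and> (int i - int k, int j - int l) \<noteq> (-1, -1)}
      = {(0, 0), (0, 1), (1, 0)} \<union> (if i = 0 \<and> j = 0 then {} else {(1, 1)})"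
    by auto
  then show ?thesis by (simp add: add.assoc)
qed

theorem lemma4p2:
  fixes a :: real and n :: nat and i j :: nat
  assumes "a > 0" and "n \<ge> 1" and "i < n" and "j < n"
  shows "Zrem (int i) (int j) 1 a n / Zn n 1 a =
    (\<Sum>(k, l) \<in> {(k, l). k \<in> {0::nat, 1} \<and> l \<in> {0::nat, 1}
                          \<and> (int i - int k, int j - int l) \<noteq> (-1, -1)}.
        a ^ (k + l) * (Zrem (int i - int k) (int j - int l) 1 a (n - 1)
                        / (Zn (n - 1) 1 a * (1 + a^2))))
    + a / (1 + a^2) * (if (i, j) = (0, 0) \<and> n \<ge> 1 then 1 else 0)"
proof -
  let ?c = "1 + a^2" and ?Z = "Zn (n - 1) 1 a" and ?R = "\<lambda>k l. Zrem (int i - int k) (int j - int l) 1 a (n - 1)"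
  have pos: "0 < ?Z" "0 < ?c" by (simp_all add: Zn_eq_aztec_pf aztec_pf_pos add_pos_nonneg)
  let ?S = "?R 0 0 + a * ?R 1 0 + a * ?R 0 1 + a^2 * ?R 1 1 + (if i = 0 \<and> j = 0 then a * ?Z else 0)"
  have "?c ^ n = ?c ^ (n - 1) * ?c" using assms(2) by (cases n) auto
  then have "Zrem (int i) (int j) 1 a n / Zn n 1 a = (?c ^ (n - 1) * ?S) / (?c ^ (n - 1) * (?Z * ?c))"
    unfolding Zrem_rec[OF assms(2-4)] Zn_rec[OF assms(2)] by (simp add: mult_ac)
  also have "\<dots> = ?S / (?Z * ?c)" using pos by simp
  finally have "Zrem (int i) (int j) 1 a n / Zn n 1 a = ?S / (?Z * ?c)" .
  moreover have "a / ?c * (if (i, j) = (0, 0) \<and> n \<ge> 1 then 1 else 0)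
      = (if i = 0 \<and> j = 0 then a * ?Z else 0) / (?Z * ?c)"
    using pos assms(2) by auto
  moreover have "(if i = 0 \<and> j = 0 then 0 else a ^ (1 + 1) * (?R 1 1 / (?Z * ?c))) = a^2 * ?R 1 1 / (?Z * ?c)"
    by (auto simp: Zrem_def power2_eq_square)
  ultimately show ?thesis
    unfolding sum_index_pairs by (simp add: add_divide_distrib algebra_simps)
qed

end
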